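(* There exist an infinite family of pairs $(T_1,T_2)$ of unrooted binary phylogenetic trees on a common leaf set $X$ (with $n=|X|$ unbounded over the family) and a function $h$ with $h(n) \to 0$ as $n \to \infty$ such that, for every pair in the family, taking $\mathcal{T}=\{T_1,T_2\}$, $\mathcal{Q}$ the set of incompatible quartets of $T_1$ and $T_2$, $\mathrm{OPT}_{\mathrm{int}}$ the optimal value of the integer program $$\text{minimize } \sum_{e \in E(T_1)} x_e \quad \text{s.t. } \sum_{e \in L(Q)} x_e \ge 1 \ \ \forall Q \in \mathcal{Q}, \qquad x_e \in \{0,1\}\ \ \forall e \in E(T_1),$$ and $\mathrm{OPT}_{\mathrm{frac}}$ the optimal value of its linear relaxation (with $x_e \in\{0,1\}$ replaced by $x_e \ge 0$), we have $\mathrm{OPT}_{\mathrm{frac}} > 0$ and $\mathrm{OPT}_{\mathrm{int}} / \mathrm{OPT}_{\mathrm{frac}} \ge 4 - h(n)$. In particular, the integrality gap of this integer program is at least $4 - o(1)$ even when restricted to two input trees.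
   Context: A (binary) phylogenetic tree on a finite set $X$ is an unrooted tree whose internal vertices have degree 3 and whose leaves are bijectively labelled by $X$. Two phylogenetic trees on $X$ are isomorphic ($\cong$) if there is a graph isomorphism between them fixing every leaf label. For $Y \subseteq X$, $T[Y]$ is the minimal subtree of $T$ connecting the leaves in $Y$, and $T|_Y$ is obtained from $T[Y]$ by suppressing all degree-2 vertices. A quartet is a 4-element subset of $X$; for $Q=\{a,b,c,d\}$, $ab|cd$ is the tree on $Q$ where $a,b$ share a neighbour $u$, $c,d$ share a neighbour $v$, and $u,v$ are adjacent. If $T_1|_Q \cong ab|cd$, $L(Q)$ is the set of edges of $T_1[\{a,b\}] \cup T_1[\{c,d\}]$. $Q$ is an incompatible quartet of $T_1,T_2$ if $T_1|_Q \not\cong T_2|_Q$. *)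

theory Defs
  imports Complex_Main
begin

text \<open>Vertices of a phylogenetic tree on a leaf set X of type 'x: leaves are Inl x
  (labelled by x), internal vertices are Inr i.\<close>

type_synonym 'x vert = "'x + nat"
type_synonym 'x ptree = "'x vert set \<times> 'x vert set set"

definition deg :: "'x vert set set \<Rightarrow> 'x vert \<Rightarrow> nat" where
  "deg E v = card {e \<in> E. v \<in> e}"

definition simple_path :: "'x vert set set \<Rightarrow> 'x vert list \<Rightarrow> bool" where
  "simple_path E p \<longleftrightarrow> p \<noteq> [] \<and> distinct p \<and>
     (\<forall>i. Suc i < length p \<longrightarrow> {p ! i, p ! Suc i} \<in> E)"

definition path_edges :: "'x vert list \<Rightarrow> 'x vert set set" where
  "path_edges p = {{p ! i, p ! Suc i} | i. Suc i < length p}"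

definition connected_graph :: "'x ptree \<Rightarrow> bool" where
  "connected_graph T \<longleftrightarrow> (\<forall>u\<in>fst T. \<forall>v\<in>fst T.
     \<exists>p. simple_path (snd T) p \<and> hd p = u \<and> last p = v)"

definition is_tree :: "'x ptree \<Rightarrow> bool" where
  "is_tree T \<longleftrightarrow> finite (fst T) \<and> fst T \<noteq> {} \<and>
     snd T \<subseteq> {{u, v} | u v. u \<in> fst T \<and> v \<in> fst T \<and> u \<noteq> v} \<and>
     connected_graph T \<and> card (snd T) + 1 = card (fst T)"

definition phylo_tree :: "'x set \<Rightarrow> 'x ptree \<Rightarrow> bool" where
  "phylo_tree X T \<longleftrightarrow> is_tree T \<and> finite X \<and>
     fst T \<inter> range Inl = Inl ` X \<and>
     (\<forall>x\<in>X. deg (snd T) (Inl x) = 1) \<and>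
     (\<forall>v\<in>fst T - Inl ` X. deg (snd T) v = 3)"

definition span_edges :: "'x ptree \<Rightarrow> 'x set \<Rightarrow> 'x vert set set" where
  "span_edges T Y = \<Union> {path_edges p | p. simple_path (snd T) p \<and>
      hd p \<in> Inl ` Y \<and> last p \<in> Inl ` Y}"

definition span_tree :: "'x ptree \<Rightarrow> 'x set \<Rightarrow> 'x ptree" where
  "span_tree T Y = (Inl ` Y \<union> \<Union> (span_edges T Y), span_edges T Y)"

text \<open>T|_Y: suppress all degree-2 vertices of T[Y]; the remaining vertices are joined
  by an edge iff they are joined in T[Y] by a path all of whose interior vertices
  were suppressed.\<close>
definition restrict_tree :: "'x ptree \<Rightarrow> 'x set \<Rightarrow> 'x ptree" where
  "restrict_tree T Y =
    (let S = span_tree T Y;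
         W = {v \<in> fst S. deg (snd S) v \<noteq> 2}
     in (W, {{u, w} | u w. u \<in> W \<and> w \<in> W \<and> u \<noteq> w \<and>
            (\<exists>p. simple_path (snd S) p \<and> hd p = u \<and> last p = w \<and>
                 (\<forall>i. 0 < i \<and> Suc i < length p \<longrightarrow> p ! i \<notin> W))}))"

definition tree_iso :: "'x ptree \<Rightarrow> 'x ptree \<Rightarrow> bool" where
  "tree_iso T1 T2 \<longleftrightarrow> (\<exists>f. bij_betw f (fst T1) (fst T2) \<and>
     (\<forall>u\<in>fst T1. \<forall>v\<in>fst T1. {u, v} \<in> snd T1 \<longleftrightarrow> {f u, f v} \<in> snd T2) \<and>
     (\<forall>x. Inl x \<in> fst T1 \<longrightarrow> f (Inl x) = Inl x))"

definition quartet_tree :: "'x \<Rightarrow> 'x \<Rightarrow> 'x \<Rightarrow> 'x \<Rightarrow> 'x ptree" where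
  "quartet_tree a b c d =
     ({Inl a, Inl b, Inl c, Inl d, Inr 0, Inr 1},
      {{Inl a, Inr 0}, {Inl b, Inr 0}, {Inl c, Inr 1}, {Inl d, Inr 1}, {Inr 0, Inr 1}})"

definition incompatible_quartets :: "'x set \<Rightarrow> 'x ptree \<Rightarrow> 'x ptree \<Rightarrow> 'x set set" where
  "incompatible_quartets X T1 T2 = {Q. Q \<subseteq> X \<and> card Q = 4 \<and>
      \<not> tree_iso (restrict_tree T1 Q) (restrict_tree T2 Q)}"

definition L_edges :: "'x ptree \<Rightarrow> 'x set \<Rightarrow> 'x vert set set" where
  "L_edges T Q = {e. \<exists>a b c d. Q = {a, b, c, d} \<and>
      tree_iso (restrict_tree T Q) (quartet_tree a b c d) \<and>
      e \<in> span_edges T {a, b} \<union> span_edges T {c, d}}"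

definition ip_feasible :: "'x set \<Rightarrow> 'x ptree \<Rightarrow> 'x ptree \<Rightarrow> ('x vert set \<Rightarrow> real) \<Rightarrow> bool" where
  "ip_feasible X T1 T2 x \<longleftrightarrow>
     (\<forall>Q\<in>incompatible_quartets X T1 T2. (\<Sum>e\<in>L_edges T1 Q. x e) \<ge> 1) \<and>
     (\<forall>e\<in>snd T1. x e \<in> {0, 1})"

definition lp_feasible :: "'x set \<Rightarrow> 'x ptree \<Rightarrow> 'x ptree \<Rightarrow> ('x vert set \<Rightarrow> real) \<Rightarrow> bool" where
  "lp_feasible X T1 T2 x \<longleftrightarrow>
     (\<forall>Q\<in>incompatible_quartets X T1 T2. (\<Sum>e\<in>L_edges T1 Q. x e) \<ge> 1) \<and>
     (\<forall>e\<in>snd T1. x e \<ge> 0)"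

definition opt_int :: "'x set \<Rightarrow> 'x ptree \<Rightarrow> 'x ptree \<Rightarrow> real" where
  "opt_int X T1 T2 = Inf {(\<Sum>e\<in>snd T1. x e) | x. ip_feasible X T1 T2 x}"

definition opt_frac :: "'x set \<Rightarrow> 'x ptree \<Rightarrow> 'x ptree \<Rightarrow> real" where
  "opt_frac X T1 T2 = Inf {(\<Sum>e\<in>snd T1. x e) | x. lp_feasible X T1 T2 x}"

end

theory Submission
  imports Defs
begin

text \<open>Take n = m^2 leaves, the positions of an m x m grid, and let T1 and T2 be the
  caterpillars listing them row by row and column by column. Every set L(Q) contains the four
  pendant edges of Q, so weight 1/4 on all pendant edges of T1 is a fractional solution of value
  n/4, while an incompatible quartet forces value at least 1.

  Now let F be an integral solution. Call a step between two leaves that are consecutive, in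
  row-major order, among those whose pendant edge avoids F intact if F contains no spine edge
  between them. Two non-adjacent intact steps form a quartet that F does not hit, so it is
  compatible, which forces the two steps to occupy disjoint intervals in column-major order as
  well. As a step spans at least m positions in row-major plus column-major order, at most 4m
  steps are intact, and every other step costs F a spine edge. Counting gives
  |F| \<ge> n - 4m - 1, so the ratio of the two optima is at least 4 - 20/m = 4 - 20/sqrt n.\<close>

section \<open>Edges of paths\<close>

lemma path_edges_Nil [simp]: "path_edges [] = {}"
  and path_edges_singleton [simp]: "path_edges [x] = {}"
  by (simp_all add: path_edges_def)

lemma path_edges_Cons_Cons [simp]:
  "path_edges (x # y # xs) = insert {x, y} (path_edges (y # xs))"
proof -
  have "{{(x # y # xs) ! i, (x # y # xs) ! Suc i} | i. Suc i < length (x # y # xs)} =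
        insert {x, y} {{(y # xs) ! i, (y # xs) ! Suc i} | i. Suc i < length (y # xs)}"
    (is "?L = ?R")
  proof
    show "?L \<subseteq> ?R"
      by (clarsimp, metis (no_types, lifting) Suc_less_SucD not0_implies_Suc
          nth_Cons_0 nth_Cons_Suc)
    show "?R \<subseteq> ?L"
    proof
      fix e assume "e \<in> ?R"
      then consider "e = {x, y}"
        | i where "e = {(y # xs) ! i, (y # xs) ! Suc i}" "Suc i < length (y # xs)"
        by blast
      then show "e \<in> ?L"
      proof cases
        case 1 then show ?thesis by (intro CollectI exI[of _ 0]) auto
      next
        case 2 then show ?thesis by (intro CollectI exI[of _ "Suc i"]) auto
      qed
    qed
  qed
  then show ?thesis
    by (simp add: path_edges_def)
qed

lemma simple_path_iff: "simple_path E p \<longleftrightarrow> p \<noteq> [] \<and> distinct p \<and> path_edges p \<subseteq> E"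
  by (auto simp: simple_path_def path_edges_def)

lemma path_edges_Cons:
  "path_edges (x # xs) = (if xs = [] then {} else insert {x, hd xs} (path_edges xs))"
  by (cases xs) auto

lemma path_edges_append:
  "path_edges (xs @ ys) = path_edges xs \<union> path_edges ys \<union>
     (if xs \<noteq> [] \<and> ys \<noteq> [] then {{last xs, hd ys}} else {})"
  by (induction xs) (auto simp: path_edges_Cons)

lemma path_edges_snoc:
  "xs \<noteq> [] \<Longrightarrow> path_edges (xs @ [y]) = insert {last xs, y} (path_edges xs)"
  by (simp add: path_edges_append)

lemma path_edges_rev [simp]: "path_edges (rev xs) = path_edges xs"
  by (induction xs) (auto simp: path_edges_append path_edges_Cons last_rev insert_commute)

lemma path_edges_map_upt:
  "path_edges (map f [k..<Suc l]) = {{f i, f (Suc i)} | i. k \<le> i \<and> i < l}"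
proof (induction l)
  case 0
  then show ?case by (cases k) auto
next
  case (Suc l)
  show ?case
  proof (cases "k \<le> Suc l")
    case True
    then have "[k..<Suc (Suc l)] = [k..<Suc l] @ [Suc l]"
      by simp
    then show ?thesis
      using Suc True by (auto simp: path_edges_append last_map less_Suc_eq)
  qed auto
qed

lemma interior_avoids_iff:
  assumes "distinct p" "p \<noteq> []"
  shows "(\<forall>i. 0 < i \<and> Suc i < length p \<longrightarrow> p ! i \<notin> W) \<longleftrightarrow>
         (\<forall>v\<in>set p. v \<noteq> hd p \<longrightarrow> v \<noteq> last p \<longrightarrow> v \<notin> W)"
proof -
  have ends: "v = hd p \<or> v = last p"
    if "v = p ! i" "i < length p" "\<not> (0 < i \<and> Suc i < length p)" for v i
    using that assms by (metis Suc_lessI diff_Suc_1 hd_conv_nth last_conv_nth neq0_conv)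
  have inner: "p ! i \<noteq> hd p \<and> p ! i \<noteq> last p" if "0 < i" "Suc i < length p" for i
    using that assms by (auto simp: hd_conv_nth last_conv_nth nth_eq_iff_index_eq)
  show ?thesis
  proof
    assume H: "\<forall>i. 0 < i \<and> Suc i < length p \<longrightarrow> p ! i \<notin> W"
    show "\<forall>v\<in>set p. v \<noteq> hd p \<longrightarrow> v \<noteq> last p \<longrightarrow> v \<notin> W"
    proof (intro ballI impI)
      fix v assume "v \<in> set p" "v \<noteq> hd p" "v \<noteq> last p"
      then obtain i where "i < length p" "v = p ! i"
        by (auto simp: in_set_conv_nth)
      with ends H \<open>v \<noteq> hd p\<close> \<open>v \<noteq> last p\<close> show "v \<notin> W"
        by blast
    qed
  next
    assume "\<forall>v\<in>set p. v \<noteq> hd p \<longrightarrow> v \<noteq> last p \<longrightarrow> v \<notin> W"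
    then show "\<forall>i. 0 < i \<and> Suc i < length p \<longrightarrow> p ! i \<notin> W"
      using inner by auto
  qed
qed

section \<open>Caterpillars\<close>

definition interval_path :: "nat \<Rightarrow> nat \<Rightarrow> nat list" where
  "interval_path k l = (if k \<le> l then [k..<Suc l] else rev [l..<Suc k])"

lemma set_interval_path: "set (interval_path k l) = {min k l..max k l}"
  by (auto simp: interval_path_def)

lemma interval_path_refl [simp]: "interval_path k k = [k]"
  by (simp add: interval_path_def)

lemma interval_path_not_Nil [simp]: "interval_path k l \<noteq> []"
  by (simp add: interval_path_def)

lemma hd_interval_path [simp]: "hd (interval_path k l) = k"
proof (cases "k \<le> l")
  case True
  then show ?thesis by (simp add: interval_path_def upt_conv_Cons del: upt_Suc)
next
  case False
  then show ?thesis by (simp add: interval_path_def hd_rev)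
qed

lemma last_interval_path [simp]: "last (interval_path k l) = l"
  by (simp add: interval_path_def last_rev)

lemma distinct_interval_path [simp]: "distinct (interval_path k l)"
  by (simp add: interval_path_def)

lemma hd_in_set_interval_path [simp]: "k \<in> set (interval_path k l)"
  and last_in_set_interval_path [simp]: "l \<in> set (interval_path k l)"
  by (simp_all add: set_interval_path)

lemma interval_path_Cons:
  assumes "k' = Suc k \<or> k = Suc k'" "k \<notin> set (interval_path k' t)"
  shows "k # interval_path k' t = interval_path k t"
  using assms(1)
proof
  assume "k' = Suc k"
  moreover from this have "Suc k \<le> t"
    using assms(2) by (auto simp: set_interval_path)
  ultimately show ?thesis
    by (simp add: interval_path_def upt_conv_Cons)
next
  assume "k = Suc k'"
  moreover from this have "t \<le> k'"
    using assms(2) by (auto simp: set_interval_path)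
  ultimately show ?thesis
    by (auto simp: interval_path_def)
qed

definition spine_edge :: "nat \<Rightarrow> 'x vert set" where
  "spine_edge k = {Inr k, Inr (Suc k)}"

lemma path_edges_interval_path:
  "path_edges (map Inr (interval_path k l) :: 'x vert list) = spine_edge ` {min k l..<max k l}"
proof (cases "k \<le> l")
  case True
  then show ?thesis
    by (auto simp: interval_path_def path_edges_map_upt spine_edge_def simp del: upt_Suc)
next
  case False
  then have "path_edges (map Inr (interval_path k l) :: 'x vert list) =
      path_edges (map Inr [l..<Suc k] :: 'x vert list)"
    by (simp add: interval_path_def rev_map[symmetric] del: upt_Suc)
  then show ?thesis
    using False by (auto simp: path_edges_map_upt spine_edge_def simp del: upt_Suc)
qed

text \<open>A caterpillar on the leaves 0, ..., n-1: leaf x hangs off the spine 1, ..., n-2 at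
  the vertex determined by its position pos x. The two outermost positions at each end share
  a spine vertex, so every spine vertex has degree 3.\<close>

locale caterpillar =
  fixes n :: nat and pos :: "nat \<Rightarrow> nat"
  assumes n_ge_4: "4 \<le> n"
    and bij_pos: "bij_betw pos {0..<n} {0..<n}"
begin

lemma pos_less: "x < n \<Longrightarrow> pos x < n"
  using bij_betwE[OF bij_pos] by simp

lemma inj_on_pos: "inj_on pos {0..<n}"
  using bij_pos by (rule bij_betw_imp_inj_on)

definition spine_at :: "nat \<Rightarrow> nat" where
  "spine_at i = (if i = 0 then 1 else if n - 1 \<le> i then n - 2 else i)"

definition anchor :: "nat \<Rightarrow> nat" where
  "anchor x = spine_at (pos x)"

definition vertices :: "nat vert set" where
  "vertices = Inl ` {0..<n} \<union> Inr ` {1..n-2}"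

definition pendant :: "nat \<Rightarrow> nat vert set" where
  "pendant x = {Inl x, Inr (anchor x)}"

definition edges :: "nat vert set set" where
  "edges = pendant ` {0..<n} \<union> spine_edge ` {1..<n-2}"

definition tree :: "nat ptree" where
  "tree = (vertices, edges)"

lemma snd_tree: "snd tree = edges"
  by (simp add: tree_def)

lemma finite_edges: "finite edges"
  by (simp add: edges_def)

lemma spine_at_range: "i < n \<Longrightarrow> 1 \<le> spine_at i \<and> spine_at i \<le> n - 2"
  using n_ge_4 by (auto simp: spine_at_def)

lemma anchor_range: "x < n \<Longrightarrow> 1 \<le> anchor x \<and> anchor x \<le> n - 2"
  using spine_at_range pos_less by (simp add: anchor_def)

lemma anchor_mono: "x < n \<Longrightarrow> y < n \<Longrightarrow> pos x \<le> pos y \<Longrightarrow> anchor x \<le> anchor y"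
  using pos_less[of x] pos_less[of y] n_ge_4 by (auto simp: anchor_def spine_at_def)

lemma Inl_in_vertices [simp]: "Inl a \<in> vertices \<longleftrightarrow> a < n"
  and Inr_in_vertices [simp]: "Inr k \<in> vertices \<longleftrightarrow> 1 \<le> k \<and> k \<le> n - 2"
  by (auto simp: vertices_def)

lemma Inr_in_pendant [simp]: "Inr k \<in> pendant x \<longleftrightarrow> k = anchor x"
  and Inl_in_pendant [simp]: "Inl y \<in> pendant x \<longleftrightarrow> y = x"
  by (auto simp: pendant_def)

lemma Inr_in_spine_edge [simp]: "(Inr k :: nat vert) \<in> spine_edge j \<longleftrightarrow> k = j \<or> k = Suc j"
  and Inl_notin_spine_edge [simp]: "(Inl y :: nat vert) \<notin> spine_edge j"
  by (auto simp: spine_edge_def)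

lemma inj_pendant: "inj pendant"
  by (rule injI) (auto simp: pendant_def doubleton_eq_iff)

lemma inj_spine_edge: "inj (spine_edge :: nat \<Rightarrow> nat vert set)"
  by (rule injI) (auto simp: spine_edge_def doubleton_eq_iff)

lemma pendant_neq_spine_edge: "pendant x \<noteq> spine_edge k"
  by (auto simp: pendant_def spine_edge_def doubleton_eq_iff)

lemma pendant_in_edges: "a < n \<Longrightarrow> pendant a \<in> edges"
  by (auto simp: edges_def)

lemma spine_edge_in_edges: "1 \<le> i \<Longrightarrow> i < n - 2 \<Longrightarrow> spine_edge i \<in> edges"
  by (auto simp: edges_def)

lemma spine_edges_subset_edges:
  "1 \<le> k \<Longrightarrow> 1 \<le> l \<Longrightarrow> k \<le> n - 2 \<Longrightarrow> l \<le> n - 2 \<Longrightarrow> spine_edge ` {min k l..<max k l} \<subseteq> edges"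
  by (auto intro!: spine_edge_in_edges)

lemma Inl_Inl_notin_edges [simp]: "{Inl a, Inl b} \<notin> edges"
  by (auto simp: edges_def pendant_def spine_edge_def doubleton_eq_iff)

lemma Inl_Inr_in_edges [simp]: "{Inl a, Inr k} \<in> edges \<longleftrightarrow> a < n \<and> k = anchor a"
  by (auto simp: edges_def pendant_def spine_edge_def doubleton_eq_iff)

lemma Inr_Inl_in_edges [simp]: "{Inr k, Inl a} \<in> edges \<longleftrightarrow> a < n \<and> k = anchor a"
  by (simp add: insert_commute)

lemma Inr_Inr_in_edges: "{Inr k, Inr l} \<in> edges \<longleftrightarrow>
    (l = Suc k \<and> 1 \<le> k \<and> k < n - 2) \<or> (k = Suc l \<and> 1 \<le> l \<and> l < n - 2)"
proof -
  have spine: "{Inr k, Inr l} = (spine_edge i :: nat vert set) \<longleftrightarrow>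
      (k = i \<and> l = Suc i) \<or> (k = Suc i \<and> l = i)" for i
    unfolding spine_edge_def doubleton_eq_iff by simp
  have "{Inr k, Inr l} \<in> (spine_edge ` {1..<n-2} :: nat vert set set) \<longleftrightarrow>
      (\<exists>i\<in>{1..<n-2}. (k = i \<and> l = Suc i) \<or> (k = Suc i \<and> l = i))"
    unfolding image_iff spine by (rule refl)
  also have "\<dots> \<longleftrightarrow> (l = Suc k \<and> 1 \<le> k \<and> k < n - 2) \<or> (k = Suc l \<and> 1 \<le> l \<and> l < n - 2)"
    by auto
  moreover have "{Inr k, Inr l} \<notin> pendant ` {0..<n}"
    by (auto simp: pendant_def doubleton_eq_iff)
  ultimately show ?thesis
    unfolding edges_def by blast
qed

definition tree_path :: "nat vert \<Rightarrow> nat vert \<Rightarrow> nat vert list" where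
  "tree_path u v =
    (case (u, v) of
      (Inr k, Inr l) \<Rightarrow> map Inr (interval_path k l)
    | (Inr k, Inl b) \<Rightarrow> map Inr (interval_path k (anchor b)) @ [Inl b]
    | (Inl a, Inr l) \<Rightarrow> Inl a # map Inr (interval_path (anchor a) l)
    | (Inl a, Inl b) \<Rightarrow>
        if a = b then [Inl a] else Inl a # map Inr (interval_path (anchor a) (anchor b)) @ [Inl b])"

lemma tree_path_Inr_Inr: "tree_path (Inr k) (Inr l) = map Inr (interval_path k l)"
  and tree_path_Inr_Inl:
    "tree_path (Inr k) (Inl b) = map Inr (interval_path k (anchor b)) @ [Inl b]"
  and tree_path_Inl_Inr: "tree_path (Inl a) (Inr l) = Inl a # map Inr (interval_path (anchor a) l)"
  and tree_path_Inl_Inl: "tree_path (Inl a) (Inl b) =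
    (if a = b then [Inl a] else Inl a # map Inr (interval_path (anchor a) (anchor b)) @ [Inl b])"
  by (simp_all add: tree_path_def)

lemma tree_path_refl: "tree_path x x = [x]"
  by (cases x) (auto simp: tree_path_def)

lemma hd_tree_path [simp]: "hd (tree_path u v) = u"
  by (cases u; cases v) (auto simp: tree_path_def hd_map)

lemma last_tree_path [simp]: "last (tree_path u v) = v"
  by (cases u; cases v) (auto simp: tree_path_def last_map)

lemma tree_path_not_Nil [simp]: "tree_path u v \<noteq> []"
  by (cases u; cases v) (auto simp: tree_path_def)

lemma distinct_tree_path: "distinct (tree_path u v)"
  by (cases u; cases v) (auto simp: tree_path_def distinct_map)

lemma tree_path_Cons:
  assumes e: "{x, z} \<in> edges" and nin: "x \<notin> set (tree_path z y)"
  shows "x # tree_path z y = tree_path x y"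
proof (cases x; cases z)
  fix a a' assume "x = Inl a" "z = Inl a'"
  then show ?thesis
    using e by simp
next
  fix a k assume x: "x = Inl a" and z: "z = Inr k"
  then have "k = anchor a"
    using e by simp
  then show ?thesis
    using x z nin
    by (cases y) (auto simp: tree_path_Inr_Inl tree_path_Inl_Inl tree_path_Inr_Inr tree_path_Inl_Inr)
next
  fix k a assume x: "x = Inr k" and z: "z = Inl a"
  then have "k = anchor a"
    using e by simp
  then show ?thesis
    using x z nin
    by (cases y) (auto simp: tree_path_Inl_Inl tree_path_Inr_Inl tree_path_Inl_Inr split: if_splits)
next
  fix k k' assume x: "x = Inr k" and z: "z = Inr k'"
  then have adjacent: "k' = Suc k \<or> k = Suc k'"
    using e by (auto simp: Inr_Inr_in_edges)
  have extend:
    "(map Inr (interval_path k t) :: nat vert list) = Inr k # map Inr (interval_path k' t)"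
    if "k \<notin> set (interval_path k' t)" for t
    using that by (simp add: interval_path_Cons[OF adjacent, symmetric])
  show ?thesis
  proof (cases y)
    case (Inl b)
    then have "k \<notin> set (interval_path k' (anchor b))"
      using x z nin by (auto simp: tree_path_Inr_Inl)
    from extend[OF this] show ?thesis
      using x z Inl by (simp add: tree_path_Inr_Inl)
  next
    case (Inr l)
    then have "k \<notin> set (interval_path k' l)"
      using x z nin by (auto simp: tree_path_Inr_Inr)
    from extend[OF this] show ?thesis
      using x z Inr by (simp add: tree_path_Inr_Inr)
  qed
qed

lemma simple_path_eq_tree_path: "simple_path edges p \<Longrightarrow> p = tree_path (hd p) (last p)"
proof (induction p)
  case Nil
  then show ?case by (simp add: simple_path_def)
next
  case (Cons x p)
  show ?case
  proof (cases p)
    case Nil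
    then show ?thesis by (simp add: tree_path_refl)
  next
    case (Cons y r)
    have "simple_path edges p"
      using Cons.prems Cons by (auto simp: simple_path_iff)
    then have "p = tree_path y (last p)"
      using Cons.IH Cons by (metis list.sel(1))
    moreover have "{x, y} \<in> edges" "x \<notin> set p"
      using Cons.prems Cons by (auto simp: simple_path_iff)
    ultimately have "x # p = tree_path x (last p)"
      using tree_path_Cons by metis
    then show ?thesis
      using Cons by simp
  qed
qed

lemma set_tree_path_Inr_Inr: "set (tree_path (Inr k) (Inr l)) = Inr ` {min k l..max k l}"
  and set_tree_path_Inr_Inl:
    "set (tree_path (Inr k) (Inl b)) = insert (Inl b) (Inr ` {min k (anchor b)..max k (anchor b)})"
  and set_tree_path_Inl_Inr:
    "set (tree_path (Inl a) (Inr l)) = insert (Inl a) (Inr ` {min (anchor a) l..max (anchor a) l})"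
  by (auto simp: tree_path_Inr_Inr tree_path_Inr_Inl tree_path_Inl_Inr set_interval_path)

lemma set_tree_path_Inl_Inl: "a \<noteq> b \<Longrightarrow> set (tree_path (Inl a) (Inl b)) =
    insert (Inl a) (insert (Inl b) (Inr ` {min (anchor a) (anchor b)..max (anchor a) (anchor b)}))"
  by (auto simp: tree_path_Inl_Inl set_interval_path)

lemma path_edges_tree_path_Inr_Inr:
  "path_edges (tree_path (Inr k) (Inr l)) = spine_edge ` {min k l..<max k l}"
  by (simp add: tree_path_Inr_Inr path_edges_interval_path)

lemma path_edges_tree_path_Inr_Inl: "path_edges (tree_path (Inr k) (Inl b)) =
    insert (pendant b) (spine_edge ` {min k (anchor b)..<max k (anchor b)})"
  by (simp add: tree_path_Inr_Inl path_edges_snoc path_edges_interval_path last_map pendant_def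
      insert_commute)

lemma path_edges_tree_path_Inl_Inr: "path_edges (tree_path (Inl a) (Inr l)) =
    insert (pendant a) (spine_edge ` {min (anchor a) l..<max (anchor a) l})"
  by (simp add: tree_path_Inl_Inr path_edges_Cons path_edges_interval_path hd_map pendant_def)

lemma path_edges_tree_path_Inl_Inl: "a \<noteq> b \<Longrightarrow> path_edges (tree_path (Inl a) (Inl b)) =
    insert (pendant a) (insert (pendant b)
      (spine_edge ` {min (anchor a) (anchor b)..<max (anchor a) (anchor b)}))"
  by (simp add: tree_path_Inl_Inl path_edges_Cons path_edges_snoc path_edges_interval_path hd_map
      last_map pendant_def insert_commute)

lemma path_edges_tree_path_subset:
  assumes "u \<in> vertices" "v \<in> vertices"
  shows "path_edges (tree_path u v) \<subseteq> edges"
proof (cases u; cases v)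
  fix a b assume "u = Inl a" "v = Inl b"
  then show ?thesis
    using assms anchor_range[of a] anchor_range[of b]
      spine_edges_subset_edges[of "anchor a" "anchor b"]
    by (cases "a = b") (auto simp: tree_path_refl path_edges_tree_path_Inl_Inl pendant_in_edges)
next
  fix a l assume "u = Inl a" "v = Inr l"
  then show ?thesis
    using assms anchor_range[of a] spine_edges_subset_edges[of "anchor a" l]
    by (auto simp: path_edges_tree_path_Inl_Inr pendant_in_edges)
next
  fix k b assume "u = Inr k" "v = Inl b"
  then show ?thesis
    using assms anchor_range[of b] spine_edges_subset_edges[of k "anchor b"]
    by (auto simp: path_edges_tree_path_Inr_Inl pendant_in_edges)
next
  fix k l assume "u = Inr k" "v = Inr l"
  then show ?thesis
    using assms spine_edges_subset_edges[of k l] by (auto simp: path_edges_tree_path_Inr_Inr)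
qed

lemma simple_path_tree_path:
  "u \<in> vertices \<Longrightarrow> v \<in> vertices \<Longrightarrow> simple_path edges (tree_path u v)"
  by (simp add: simple_path_iff distinct_tree_path path_edges_tree_path_subset)

lemma card_vertices: "card vertices = n + (n - 2)"
proof -
  have "card vertices =
      card (Inl ` {0..<n} :: nat vert set) + card (Inr ` {1..n-2} :: nat vert set)"
    unfolding vertices_def by (rule card_Un_disjoint) auto
  also have "\<dots> = n + (n - 2)"
    by (simp add: card_image)
  finally show ?thesis .
qed

lemma card_edges: "card edges = n + (n - 3)"
proof -
  have "card edges = card (pendant ` {0..<n}) + card (spine_edge ` {1..<n-2} :: nat vert set set)"
    unfolding edges_def by (rule card_Un_disjoint) (auto simp: pendant_neq_spine_edge)
  also have "\<dots> = n + (n - 3)"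
    using inj_pendant inj_spine_edge by (simp add: card_image inj_on_subset)
  finally show ?thesis .
qed

lemma edges_subset_pairs: "edges \<subseteq> {{u, v} |u v. u \<in> vertices \<and> v \<in> vertices \<and> u \<noteq> v}"
proof
  fix e assume "e \<in> edges"
  then consider (pendant) x where "x < n" "e = pendant x"
    | (spine) k where "1 \<le> k" "k < n - 2" "e = spine_edge k"
    unfolding edges_def by auto
  then show "e \<in> {{u, v} |u v. u \<in> vertices \<and> v \<in> vertices \<and> u \<noteq> v}"
  proof cases
    case pendant
    then show ?thesis
      using anchor_range[of x] unfolding pendant_def
      by (intro CollectI exI[of _ "Inl x"] exI[of _ "Inr (anchor x)"]) auto
  next
    case spine
    then show ?thesis
      unfolding spine_edge_def by (intro CollectI exI[of _ "Inr k"] exI[of _ "Inr (Suc k)"]) auto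
  qed
qed

lemma deg_leaf: "x < n \<Longrightarrow> deg edges (Inl x) = 1"
proof -
  assume "x < n"
  then have "{e \<in> edges. Inl x \<in> e} = {pendant x}"
    unfolding edges_def by auto
  then show ?thesis
    by (simp add: deg_def)
qed

lemma card_anchor_eq: "card {x \<in> {0..<n}. anchor x = k} = card {i \<in> {0..<n}. spine_at i = k}"
proof -
  have "pos ` {x \<in> {0..<n}. anchor x = k} = {i \<in> pos ` {0..<n}. spine_at i = k}"
    by (auto simp: anchor_def)
  also have "\<dots> = {i \<in> {0..<n}. spine_at i = k}"
    using bij_betw_imp_surj_on[OF bij_pos] by simp
  finally have image: "pos ` {x \<in> {0..<n}. anchor x = k} = {i \<in> {0..<n}. spine_at i = k}" .
  have "inj_on pos {x \<in> {0..<n}. anchor x = k}"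
    using inj_on_pos by (rule inj_on_subset) auto
  from card_image[OF this] show ?thesis
    unfolding image by simp
qed

lemma deg_spine:
  assumes k: "1 \<le> k" "k \<le> n - 2"
  shows "deg edges (Inr k) = 3"
proof -
  let ?P = "{x \<in> {0..<n}. anchor x = k}" and ?S = "{j \<in> {1..<n-2}. j = k \<or> Suc j = k}"
  have incident: "{e \<in> edges. Inr k \<in> e} = pendant ` ?P \<union> spine_edge ` ?S"
    unfolding edges_def by auto
  have "deg edges (Inr k) = card (pendant ` ?P) + card (spine_edge ` ?S :: nat vert set set)"
    unfolding deg_def incident by (rule card_Un_disjoint) (auto simp: pendant_neq_spine_edge)
  also have "\<dots> = card {i \<in> {0..<n}. spine_at i = k} + card ?S"
    using inj_pendant inj_spine_edge card_anchor_eq by (simp add: card_image inj_on_subset)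
  also have "\<dots> = 3"
  proof -
    have spine_at_eq: "spine_at i = k \<longleftrightarrow>
        (k = 1 \<and> i \<le> 1) \<or> (k = n - 2 \<and> n - 2 \<le> i) \<or> (1 < k \<and> k < n - 2 \<and> i = k)"
      if "i < n" for i
      using that k n_ge_4 unfolding spine_at_def by (cases "i = 0"; cases "n - 1 \<le> i") auto
    consider "k = 1" | "k = n - 2" | "1 < k" "k < n - 2"
      using k by linarith
    then show ?thesis
    proof cases
      case 1
      then have "{i \<in> {0..<n}. spine_at i = k} = {0, 1}" "?S = {1}"
        using n_ge_4 spine_at_eq by auto
      then show ?thesis by simp
    next
      case 2
      then have "{i \<in> {0..<n}. spine_at i = k} = {n - 2, n - 1}" "?S = {n - 3}"
        using n_ge_4 spine_at_eq by auto
      then show ?thesis using n_ge_4 by simp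
    next
      case 3
      then have "{i \<in> {0..<n}. spine_at i = k} = {k}" "?S = {k - 1, k}"
        using n_ge_4 spine_at_eq by auto
      then show ?thesis using 3 by simp
    qed
  qed
  finally show ?thesis .
qed

lemma phylo_tree_caterpillar: "phylo_tree {0..<n} tree"
  unfolding phylo_tree_def is_tree_def tree_def fst_conv snd_conv
proof (intro conjI)
  show "finite vertices" "vertices \<noteq> {}"
    using n_ge_4 by (auto simp: vertices_def)
  show "edges \<subseteq> {{u, v} |u v. u \<in> vertices \<and> v \<in> vertices \<and> u \<noteq> v}"
    by (rule edges_subset_pairs)
  show "connected_graph (vertices, edges)"
    unfolding connected_graph_def fst_conv snd_conv
    using simple_path_tree_path by (metis hd_tree_path last_tree_path)
  show "card edges + 1 = card vertices"
    using n_ge_4 by (simp add: card_edges card_vertices)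
  show "vertices \<inter> range Inl = Inl ` {0..<n}"
    by (auto simp: vertices_def)
  show "\<forall>x\<in>{0..<n}. deg edges (Inl x) = 1"
    using deg_leaf by simp
  show "\<forall>v\<in>vertices - Inl ` {0..<n}. deg edges v = 3"
    using deg_spine by (auto simp: vertices_def)
qed simp

end

section \<open>Restricting a caterpillar to a quartet\<close>

lemma card_4_distinct:
  assumes "card {a, b, c, d} = (4::nat)"
  shows "a \<noteq> b \<and> a \<noteq> c \<and> a \<noteq> d \<and> b \<noteq> c \<and> b \<noteq> d \<and> c \<noteq> d"
  using assms by (auto simp: card_insert_if split: if_splits)

lemma span_edges_subset: "span_edges T Y \<subseteq> snd T"
  by (auto simp: span_edges_def simple_path_iff)

lemma L_edges_subset: "L_edges T Q \<subseteq> snd T"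
  using span_edges_subset by (fastforce simp: L_edges_def)

definition has_cherry :: "'x ptree \<Rightarrow> 'x \<Rightarrow> 'x \<Rightarrow> bool" where
  "has_cherry R x y \<longleftrightarrow> (\<exists>v\<in>fst R. {v, Inl x} \<in> snd R \<and> {v, Inl y} \<in> snd R)"

lemma tree_iso_has_cherry_iff:
  assumes iso: "tree_iso R S" and leaves: "Inl x \<in> fst R" "Inl y \<in> fst R"
  shows "has_cherry R x y \<longleftrightarrow> has_cherry S x y"
proof -
  obtain f where bij: "bij_betw f (fst R) (fst S)"
    and edge: "\<And>u v. u \<in> fst R \<Longrightarrow> v \<in> fst R \<Longrightarrow> {u, v} \<in> snd R \<longleftrightarrow> {f u, f v} \<in> snd S"
    and leaf: "\<And>z. Inl z \<in> fst R \<Longrightarrow> f (Inl z) = Inl z"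
    using iso unfolding tree_iso_def by blast
  have "has_cherry R x y \<longleftrightarrow> (\<exists>v\<in>fst R. {f v, Inl x} \<in> snd S \<and> {f v, Inl y} \<in> snd S)"
    unfolding has_cherry_def using edge[OF _ leaves(1)] edge[OF _ leaves(2)] leaf leaves by auto
  also have "\<dots> \<longleftrightarrow> (\<exists>w\<in>f ` fst R. {w, Inl x} \<in> snd S \<and> {w, Inl y} \<in> snd S)"
    by blast
  also have "f ` fst R = fst S"
    using bij by (simp add: bij_betw_def)
  finally show ?thesis
    unfolding has_cherry_def .
qed

lemma has_cherry_quartet_tree:
  "has_cherry (quartet_tree a b c d) a b" "has_cherry (quartet_tree a b c d) c d"
  by (auto simp: has_cherry_def quartet_tree_def insert_commute)

context caterpillar begin

lemma span_edges_eq_tree_paths: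
  assumes "Y \<subseteq> {0..<n}"
  shows "span_edges tree Y = \<Union> {path_edges (tree_path (Inl u) (Inl v)) | u v. u \<in> Y \<and> v \<in> Y}"
    (is "_ = ?paths")
proof
  show "span_edges tree Y \<subseteq> ?paths"
  proof
    fix e assume "e \<in> span_edges tree Y"
    then obtain p where p: "simple_path edges p" "hd p \<in> Inl ` Y" "last p \<in> Inl ` Y"
      "e \<in> path_edges p"
      unfolding span_edges_def tree_def by auto
    then obtain u v where uv: "u \<in> Y" "v \<in> Y" "hd p = Inl u" "last p = Inl v"
      by blast
    then have "p = tree_path (Inl u) (Inl v)"
      using simple_path_eq_tree_path[OF p(1)] by simp
    then show "e \<in> ?paths"
      using p(4) uv by auto
  qed
next
  show "?paths \<subseteq> span_edges tree Y"
  proof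
    fix e assume "e \<in> ?paths"
    then obtain u v where uv: "u \<in> Y" "v \<in> Y" "e \<in> path_edges (tree_path (Inl u) (Inl v))"
      by blast
    have "simple_path edges (tree_path (Inl u) (Inl v))"
      using assms uv by (intro simple_path_tree_path) auto
    then show "e \<in> span_edges tree Y"
      unfolding span_edges_def tree_def snd_conv using uv
      by (intro UnionI[of "path_edges (tree_path (Inl u) (Inl v))"]) auto
  qed
qed

lemma span_edges_pair:
  assumes "a < n" "b < n" "a \<noteq> b"
  shows "span_edges tree {a, b} = insert (pendant a) (insert (pendant b)
    (spine_edge ` {min (anchor a) (anchor b)..<max (anchor a) (anchor b)}))"
proof -
  have "span_edges tree {a, b} =
      \<Union> {path_edges (tree_path (Inl u) (Inl v)) | u v. u \<in> {a, b} \<and> v \<in> {a, b}}"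
    using assms by (intro span_edges_eq_tree_paths) auto
  also have "\<dots> = path_edges (tree_path (Inl a) (Inl b)) \<union> path_edges (tree_path (Inl b) (Inl a))"
    by (auto simp: tree_path_refl)
  also have "path_edges (tree_path (Inl b) (Inl a)) = path_edges (tree_path (Inl a) (Inl b))"
    using assms(3)
    by (simp add: path_edges_tree_path_Inl_Inl min.commute max.commute insert_commute)
  finally show ?thesis
    using assms by (simp add: path_edges_tree_path_Inl_Inl)
qed

text \<open>Paths in a tree are unique, so the path required in the definition of
  restrict_tree can only be the tree path.\<close>

lemma restricted_path_iff:
  assumes "F \<subseteq> edges" "u \<in> vertices" "w \<in> vertices"
  shows "(\<exists>p. simple_path F p \<and> hd p = u \<and> last p = w \<and>
            (\<forall>i. 0 < i \<and> Suc i < length p \<longrightarrow> p ! i \<notin> W)) \<longleftrightarrow>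
         path_edges (tree_path u w) \<subseteq> F \<and>
           (\<forall>v\<in>set (tree_path u w). v \<noteq> u \<longrightarrow> v \<noteq> w \<longrightarrow> v \<notin> W)"
proof
  assume "\<exists>p. simple_path F p \<and> hd p = u \<and> last p = w \<and>
            (\<forall>i. 0 < i \<and> Suc i < length p \<longrightarrow> p ! i \<notin> W)"
  then obtain p where p: "simple_path F p" "hd p = u" "last p = w"
    "\<forall>i. 0 < i \<and> Suc i < length p \<longrightarrow> p ! i \<notin> W"
    by blast
  have "simple_path edges p"
    using p(1) assms(1) by (auto simp: simple_path_iff)
  then have "p = tree_path u w"
    using simple_path_eq_tree_path p(2,3) by metis
  moreover have "distinct p" "p \<noteq> []"
    using p(1) by (auto simp: simple_path_iff)
  then have "\<forall>v\<in>set p. v \<noteq> hd p \<longrightarrow> v \<noteq> last p \<longrightarrow> v \<notin> W"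
    using interior_avoids_iff p(4) by blast
  ultimately show "path_edges (tree_path u w) \<subseteq> F \<and>
      (\<forall>v\<in>set (tree_path u w). v \<noteq> u \<longrightarrow> v \<noteq> w \<longrightarrow> v \<notin> W)"
    using p(1,2,3) by (auto simp: simple_path_iff)
next
  assume avoid: "path_edges (tree_path u w) \<subseteq> F \<and>
      (\<forall>v\<in>set (tree_path u w). v \<noteq> u \<longrightarrow> v \<noteq> w \<longrightarrow> v \<notin> W)"
  then have "simple_path F (tree_path u w)"
    by (simp add: simple_path_iff distinct_tree_path)
  moreover have "\<forall>i. 0 < i \<and> Suc i < length (tree_path u w) \<longrightarrow> tree_path u w ! i \<notin> W"
    using interior_avoids_iff[OF distinct_tree_path[of u w] tree_path_not_Nil[of u w], of W] avoid
    by simp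
  ultimately show "\<exists>p. simple_path F p \<and> hd p = u \<and> last p = w \<and>
      (\<forall>i. 0 < i \<and> Suc i < length p \<longrightarrow> p ! i \<notin> W)"
    by (intro exI[of _ "tree_path u w"]) simp
qed

definition ordered_quartet :: "nat \<Rightarrow> nat \<Rightarrow> nat \<Rightarrow> nat \<Rightarrow> bool" where
  "ordered_quartet a b c d \<longleftrightarrow>
     a < n \<and> b < n \<and> c < n \<and> d < n \<and> pos a < pos b \<and> pos b < pos c \<and> pos c < pos d"

text \<open>The restriction of the caterpillar to an ordered quartet is ab|cd; the spine vertices
  that survive the suppression of degree-2 vertices are those of the inner leaves b and c.\<close>

definition quartet_vertices :: "nat \<Rightarrow> nat \<Rightarrow> nat \<Rightarrow> nat \<Rightarrow> nat vert set" where
  "quartet_vertices a b c d = {Inl a, Inl b, Inl c, Inl d, Inr (anchor b), Inr (anchor c)}"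

definition quartet_edges :: "nat \<Rightarrow> nat \<Rightarrow> nat \<Rightarrow> nat \<Rightarrow> nat vert set set" where
  "quartet_edges a b c d =
    {{Inl a, Inr (anchor b)}, {Inl b, Inr (anchor b)}, {Inl c, Inr (anchor c)},
     {Inl d, Inr (anchor c)}, {Inr (anchor b), Inr (anchor c)}}"

end

locale caterpillar_quartet = caterpillar +
  fixes a b c d :: nat
  assumes ordered: "ordered_quartet a b c d"
begin

abbreviation "Q \<equiv> {a, b, c, d}"

lemma leaves_less: "a < n" "b < n" "c < n" "d < n"
  using ordered by (auto simp: ordered_quartet_def)

lemma pos_increasing: "pos a < pos b" "pos b < pos c" "pos c < pos d"
  using ordered by (auto simp: ordered_quartet_def)

lemma leaves_distinct: "a \<noteq> b" "a \<noteq> c" "a \<noteq> d" "b \<noteq> c" "b \<noteq> d" "c \<noteq> d"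
  using pos_increasing by auto

lemma card_quartet: "card Q = 4"
  using leaves_distinct by simp

lemma quartet_subset: "Q \<subseteq> {0..<n}"
  using leaves_less by auto

lemma anchor_a_le_b: "anchor a \<le> anchor b"
  and anchor_c_le_d: "anchor c \<le> anchor d"
  using anchor_mono leaves_less pos_increasing by simp_all

lemma anchor_b_less_c: "anchor b < anchor c"
  using pos_less[OF leaves_less(3)] pos_less[OF leaves_less(4)] pos_increasing n_ge_4
  by (auto simp: anchor_def spine_at_def)

lemma anchor_bounds: "x \<in> Q \<Longrightarrow> anchor a \<le> anchor x \<and> anchor x \<le> anchor d"
  using anchor_a_le_b anchor_b_less_c anchor_c_le_d by auto

lemma Inr_in_quartet_vertices: "Inr k \<in> quartet_vertices a b c d \<longleftrightarrow> k = anchor b \<or> k = anchor c"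
  and Inl_in_quartet_vertices: "Inl x \<in> quartet_vertices a b c d \<longleftrightarrow> x \<in> Q"
  by (auto simp: quartet_vertices_def)

lemma quartet_vertices_subset: "quartet_vertices a b c d \<subseteq> vertices"
  unfolding quartet_vertices_def using leaves_less anchor_range[of b] anchor_range[of c] by auto

lemma span_edges_quartet: "span_edges tree Q =
    {pendant a, pendant b, pendant c, pendant d} \<union> spine_edge ` {anchor a..<anchor d}"
proof
  show "span_edges tree Q \<subseteq>
      {pendant a, pendant b, pendant c, pendant d} \<union> spine_edge ` {anchor a..<anchor d}"
  proof
    fix e assume "e \<in> span_edges tree Q"
    then obtain u v where uv: "u \<in> Q" "v \<in> Q" "e \<in> path_edges (tree_path (Inl u) (Inl v))"
      unfolding span_edges_eq_tree_paths[OF quartet_subset] by blast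
    then have "u \<noteq> v"
      by (auto simp: tree_path_refl)
    then have e: "e \<in> insert (pendant u) (insert (pendant v)
        (spine_edge ` {min (anchor u) (anchor v)..<max (anchor u) (anchor v)}))"
      using uv path_edges_tree_path_Inl_Inl by auto
    have "spine_edge ` {min (anchor u) (anchor v)..<max (anchor u) (anchor v)} \<subseteq>
        (spine_edge ` {anchor a..<anchor d} :: nat vert set set)"
      using anchor_bounds[OF uv(1)] anchor_bounds[OF uv(2)] by (intro image_mono) auto
    then show "e \<in>
        {pendant a, pendant b, pendant c, pendant d} \<union> spine_edge ` {anchor a..<anchor d}"
      using e uv(1,2) by blast
  qed
next
  have sub: "path_edges (tree_path (Inl u) (Inl v)) \<subseteq> span_edges tree Q" if "u \<in> Q" "v \<in> Q" for u v
    unfolding span_edges_eq_tree_paths[OF quartet_subset] using that by blast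
  have "path_edges (tree_path (Inl a) (Inl d)) =
      insert (pendant a) (insert (pendant d) (spine_edge ` {anchor a..<anchor d}))"
    using path_edges_tree_path_Inl_Inl[of a d] leaves_distinct anchor_a_le_b anchor_b_less_c
      anchor_c_le_d
    by (simp add: min_def max_def)
  moreover have "pendant b \<in> path_edges (tree_path (Inl b) (Inl a))"
    "pendant c \<in> path_edges (tree_path (Inl c) (Inl a))"
    using path_edges_tree_path_Inl_Inl leaves_distinct by auto
  ultimately show
    "{pendant a, pendant b, pendant c, pendant d} \<union> spine_edge ` {anchor a..<anchor d} \<subseteq>
      span_edges tree Q"
    using sub[of a d] sub[of b a] sub[of c a] by auto
qed

lemma span_edges_quartet_subset: "span_edges tree Q \<subseteq> edges"
  unfolding span_edges_quartet using leaves_less anchor_range[of a] anchor_range[of d]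
  by (auto simp: pendant_in_edges intro!: spine_edge_in_edges)

lemma vertices_span_tree_quartet: "fst (span_tree tree Q) = Inl ` Q \<union> Inr ` {anchor a..anchor d}"
proof -
  have "Inr k \<in> \<Union> (span_edges tree Q) \<longleftrightarrow>
      k \<in> anchor ` Q \<or> (\<exists>j\<in>{anchor a..<anchor d}. k = j \<or> k = Suc j)" for k
    unfolding span_edges_quartet by auto
  also have "\<dots> k \<longleftrightarrow> k \<in> {anchor a..anchor d}" for k
  proof
    assume "k \<in> anchor ` Q \<or> (\<exists>j\<in>{anchor a..<anchor d}. k = j \<or> k = Suc j)"
    then show "k \<in> {anchor a..anchor d}"
    proof
      assume "k \<in> anchor ` Q"
      then obtain x where "x \<in> Q" "k = anchor x"
        by blast
      then show ?thesis
        using anchor_bounds[of x] by simp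
    qed auto
  next
    assume "k \<in> {anchor a..anchor d}"
    then show "k \<in> anchor ` Q \<or> (\<exists>j\<in>{anchor a..<anchor d}. k = j \<or> k = Suc j)"
      by (cases "k < anchor d") auto
  qed
  finally have spine: "Inr k \<in> \<Union> (span_edges tree Q) \<longleftrightarrow> k \<in> {anchor a..anchor d}" for k .
  have leaf: "Inl x \<in> \<Union> (span_edges tree Q) \<longleftrightarrow> x \<in> Q" for x
    unfolding span_edges_quartet by auto
  have "\<Union> (span_edges tree Q) = Inl ` Q \<union> Inr ` {anchor a..anchor d}"
  proof (rule set_eqI)
    fix v :: "nat vert"
    show "v \<in> \<Union> (span_edges tree Q) \<longleftrightarrow> v \<in> Inl ` Q \<union> Inr ` {anchor a..anchor d}"
      by (cases v) (simp_all only: spine leaf, auto)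
  qed
  then show ?thesis
    unfolding span_tree_def by auto
qed

lemma card_filter_quartet: "card {x \<in> Q. P x} =
    (if P a then 1 else 0) + (if P b then 1 else 0) + (if P c then 1 else 0) + (if P d then 1 else 0)"
proof -
  have "card {x \<in> Q. P x} = (\<Sum>x\<in>Q. if P x then 1 else 0)"
    by (simp add: sum.If_cases Int_def)
  also have "\<dots> =
      (if P a then 1 else 0) + (if P b then 1 else 0) + (if P c then 1 else 0) + (if P d then 1 else 0)"
    using leaves_distinct by simp
  finally show ?thesis .
qed

lemma deg_span_leaf: "x \<in> Q \<Longrightarrow> deg (span_edges tree Q) (Inl x) = 1"
proof -
  assume "x \<in> Q"
  then have "{e \<in> span_edges tree Q. Inl x \<in> e} = {pendant x}"
    unfolding span_edges_quartet by auto
  then show ?thesis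
    by (simp add: deg_def)
qed

lemma deg_span_spine:
  assumes k: "anchor a \<le> k" "k \<le> anchor d"
  shows "deg (span_edges tree Q) (Inr k) =
    (if anchor a = k then 1 else 0) + (if anchor b = k then 1 else 0) +
    (if anchor c = k then 1 else 0) + (if anchor d = k then 1 else 0) +
    (if anchor a < k then 1 else 0) + (if k < anchor d then 1 else 0)"
proof -
  let ?S = "{j \<in> {anchor a..<anchor d}. j = k \<or> Suc j = k}"
  have incident:
    "{e \<in> span_edges tree Q. Inr k \<in> e} = pendant ` {x \<in> Q. anchor x = k} \<union> spine_edge ` ?S"
    unfolding span_edges_quartet by auto
  have "deg (span_edges tree Q) (Inr k) =
      card (pendant ` {x \<in> Q. anchor x = k}) + card (spine_edge ` ?S :: nat vert set set)"
    unfolding deg_def incident by (rule card_Un_disjoint) (auto simp: pendant_neq_spine_edge)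
  also have "\<dots> = card {x \<in> Q. anchor x = k} + card ?S"
    using inj_pendant inj_spine_edge by (simp add: card_image inj_on_subset)
  also have "card ?S = (if anchor a < k then 1 else 0) + (if k < anchor d then 1 else 0)"
  proof -
    have "anchor a < anchor d"
      using anchor_a_le_b anchor_b_less_c anchor_c_le_d by simp
    then consider "anchor a < k" "k < anchor d" | "anchor a = k" | "k = anchor d" "anchor a < k"
      using k by linarith
    then show ?thesis
    proof cases
      case 1
      then have "?S = {k - 1, k}" by auto
      then show ?thesis using 1 by simp
    next
      case 2
      then have "?S = {k}" using \<open>anchor a < anchor d\<close> by auto
      then show ?thesis using 2 \<open>anchor a < anchor d\<close> by simp
    next
      case 3
      then have "?S = {k - 1}" by auto
      then show ?thesis using 3 by simp
    qed
  qed
  finally show ?thesis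
    unfolding card_filter_quartet by simp
qed

lemma branching_vertices_quartet:
  "{v \<in> fst (span_tree tree Q). deg (span_edges tree Q) v \<noteq> 2} = quartet_vertices a b c d"
proof (rule set_eqI)
  fix v :: "nat vert"
  show "v \<in> {v \<in> fst (span_tree tree Q). deg (span_edges tree Q) v \<noteq> 2} \<longleftrightarrow>
      v \<in> quartet_vertices a b c d"
  proof (cases v)
    case (Inl x)
    have "Inl x \<in> fst (span_tree tree Q) \<longleftrightarrow> x \<in> Q"
      by (auto simp: vertices_span_tree_quartet)
    then show ?thesis
      using deg_span_leaf[of x] Inl by (auto simp: Inl_in_quartet_vertices)
  next
    case (Inr k)
    have "v \<in> {v \<in> fst (span_tree tree Q). deg (span_edges tree Q) v \<noteq> 2} \<longleftrightarrow>
        anchor a \<le> k \<and> k \<le> anchor d \<and> deg (span_edges tree Q) (Inr k) \<noteq> 2"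
      unfolding vertices_span_tree_quartet Inr by auto
    also have "\<dots> \<longleftrightarrow> k = anchor b \<or> k = anchor c"
      using deg_span_spine[of k] anchor_a_le_b anchor_b_less_c anchor_c_le_d
      by (auto split: if_splits)
    also have "\<dots> \<longleftrightarrow> v \<in> quartet_vertices a b c d"
      unfolding quartet_vertices_def Inr by auto
    finally show ?thesis .
  qed
qed

lemma restricted_leaf_edge:
  assumes x: "x \<in> Q" and k: "k = anchor b \<or> k = anchor c"
    and avoid: "\<forall>v\<in>set (tree_path (Inl x) (Inr k)).
      v \<noteq> Inl x \<longrightarrow> v \<noteq> Inr k \<longrightarrow> v \<notin> quartet_vertices a b c d"
  shows "{Inl x, Inr k} \<in> quartet_edges a b c d"
proof -
  have BC: "anchor b < anchor c" "anchor a \<le> anchor b" "anchor c \<le> anchor d"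
    using anchor_a_le_b anchor_b_less_c anchor_c_le_d by auto
  have path:
    "set (tree_path (Inl x) (Inr k)) = insert (Inl x) (Inr ` {min (anchor x) k..max (anchor x) k})"
    by (rule set_tree_path_Inl_Inr)
  consider "x = a \<or> x = b" "k = anchor b" | "x = c \<or> x = d" "k = anchor c"
    | "x = a \<or> x = b" "k = anchor c" | "x = c \<or> x = d" "k = anchor b"
    using x k by auto
  then show ?thesis
  proof cases
    case 3
    then have "Inr (anchor b) \<in> set (tree_path (Inl x) (Inr k))"
      using path BC by auto
    then show ?thesis
      using avoid 3 BC by (auto simp: Inr_in_quartet_vertices)
  next
    case 4
    then have "Inr (anchor c) \<in> set (tree_path (Inl x) (Inr k))"
      using path BC by auto
    then show ?thesis
      using avoid 4 BC by (auto simp: Inr_in_quartet_vertices)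
  qed (auto simp: quartet_edges_def)
qed

lemma restricted_edge_in_quartet_edges:
  assumes u: "u \<in> quartet_vertices a b c d" and w: "w \<in> quartet_vertices a b c d" and "u \<noteq> w"
    and avoid: "\<forall>v\<in>set (tree_path u w). v \<noteq> u \<longrightarrow> v \<noteq> w \<longrightarrow> v \<notin> quartet_vertices a b c d"
  shows "{u, w} \<in> quartet_edges a b c d"
proof (cases u; cases w)
  fix x y assume uw: "u = Inl x" "w = Inl y"
  then have "x \<in> Q" "y \<in> Q" "x \<noteq> y"
    using u w \<open>u \<noteq> w\<close> by (simp_all add: Inl_in_quartet_vertices)
  then have "anchor b \<in> {min (anchor x) (anchor y)..max (anchor x) (anchor y)} \<or>
      anchor c \<in> {min (anchor x) (anchor y)..max (anchor x) (anchor y)}"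
    using anchor_a_le_b anchor_b_less_c anchor_c_le_d by auto
  then have "Inr (anchor b) \<in> set (tree_path u w) \<or> Inr (anchor c) \<in> set (tree_path u w)"
    using uw set_tree_path_Inl_Inl[OF \<open>x \<noteq> y\<close>] by auto
  then show ?thesis
    using avoid uw by (auto simp: Inr_in_quartet_vertices)
next
  fix x k assume uw: "u = Inl x" "w = Inr k"
  show ?thesis
    unfolding uw
  proof (rule restricted_leaf_edge)
    show "x \<in> Q" "k = anchor b \<or> k = anchor c"
      using u w uw by (simp_all add: Inl_in_quartet_vertices Inr_in_quartet_vertices)
  qed (use avoid uw in simp)
next
  fix k x assume uw: "u = Inr k" "w = Inl x"
  have "set (tree_path (Inr k) (Inl x)) = set (tree_path (Inl x) (Inr k))"
    by (simp add: set_tree_path_Inr_Inl set_tree_path_Inl_Inr min.commute max.commute)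
  then have "{Inl x, Inr k} \<in> quartet_edges a b c d"
    using u w uw avoid
    by (intro restricted_leaf_edge) (auto simp: Inl_in_quartet_vertices Inr_in_quartet_vertices)
  then show ?thesis
    unfolding uw by (simp add: insert_commute)
next
  fix k l assume "u = Inr k" "w = Inr l"
  then show ?thesis
    using u w \<open>u \<noteq> w\<close> by (auto simp: quartet_edges_def Inr_in_quartet_vertices insert_commute)
qed

lemma cherry_path_in_span:
  assumes "x \<in> {a, b} \<and> k = anchor b \<or> x \<in> {c, d} \<and> k = anchor c"
  shows "path_edges (tree_path (Inl x) (Inr k)) \<subseteq> span_edges tree Q"
    and "\<forall>v\<in>set (tree_path (Inl x) (Inr k)).
      v \<noteq> Inl x \<longrightarrow> v \<noteq> Inr k \<longrightarrow> v \<notin> quartet_vertices a b c d"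
proof -
  have BC: "anchor b < anchor c" "anchor a \<le> anchor b" "anchor c \<le> anchor d"
    using anchor_a_le_b anchor_b_less_c anchor_c_le_d by auto
  have "anchor a \<le> min (anchor x) k" "max (anchor x) k \<le> anchor d"
    using assms BC anchor_bounds[of x] by auto
  then have "spine_edge ` {min (anchor x) k..<max (anchor x) k} \<subseteq> spine_edge ` {anchor a..<anchor d}"
    by (intro image_mono) auto
  then show "path_edges (tree_path (Inl x) (Inr k)) \<subseteq> span_edges tree Q"
    using assms by (auto simp: path_edges_tree_path_Inl_Inr span_edges_quartet)
  show "\<forall>v\<in>set (tree_path (Inl x) (Inr k)).
      v \<noteq> Inl x \<longrightarrow> v \<noteq> Inr k \<longrightarrow> v \<notin> quartet_vertices a b c d"
    using assms BC by (auto simp: set_tree_path_Inl_Inr Inr_in_quartet_vertices)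
qed

lemma quartet_edge_restricted:
  assumes "e \<in> quartet_edges a b c d"
  shows "\<exists>u w. e = {u, w} \<and> u \<in> quartet_vertices a b c d \<and> w \<in> quartet_vertices a b c d \<and>
    u \<noteq> w \<and> path_edges (tree_path u w) \<subseteq> span_edges tree Q \<and>
    (\<forall>v\<in>set (tree_path u w). v \<noteq> u \<longrightarrow> v \<noteq> w \<longrightarrow> v \<notin> quartet_vertices a b c d)"
    (is "\<exists>u w. ?edge u w")
proof -
  have witness: "\<exists>u w. ?edge u w" if "?edge u w" for u w
    using that by blast
  consider (leaf) x k
      where "e = {Inl x, Inr k}" "x \<in> {a, b} \<and> k = anchor b \<or> x \<in> {c, d} \<and> k = anchor c"
    | (spine) "e = {Inr (anchor b), Inr (anchor c)}"
    using assms unfolding quartet_edges_def by blast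
  then show ?thesis
  proof cases
    case leaf
    show ?thesis
    proof (rule witness[of "Inl x" "Inr k"], intro conjI)
      show "path_edges (tree_path (Inl x) (Inr k)) \<subseteq> span_edges tree Q"
        "\<forall>v\<in>set (tree_path (Inl x) (Inr k)).
          v \<noteq> Inl x \<longrightarrow> v \<noteq> Inr k \<longrightarrow> v \<notin> quartet_vertices a b c d"
        using cherry_path_in_span[OF leaf(2)] by simp_all
    qed (use leaf in \<open>auto simp: quartet_vertices_def\<close>)
  next
    case spine
    have "anchor a \<le> anchor b" "anchor b < anchor c" "anchor c \<le> anchor d"
      using anchor_a_le_b anchor_b_less_c anchor_c_le_d by auto
    then show ?thesis
    proof (intro witness[of "Inr (anchor b)" "Inr (anchor c)"] conjI)
      show "path_edges (tree_path (Inr (anchor b)) (Inr (anchor c))) \<subseteq> span_edges tree Q"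
        using \<open>anchor a \<le> anchor b\<close> \<open>anchor b < anchor c\<close> \<open>anchor c \<le> anchor d\<close>
        by (auto simp: path_edges_tree_path_Inr_Inr span_edges_quartet)
    qed (use spine in
      \<open>auto simp: set_tree_path_Inr_Inr Inr_in_quartet_vertices quartet_vertices_def\<close>)
  qed
qed

lemma restrict_tree_quartet:
  "restrict_tree tree Q = (quartet_vertices a b c d, quartet_edges a b c d)"
proof -
  let ?V = "quartet_vertices a b c d"
  let ?P = "\<lambda>u w. \<exists>p. simple_path (span_edges tree Q) p \<and> hd p = u \<and> last p = w \<and>
    (\<forall>i. 0 < i \<and> Suc i < length p \<longrightarrow> p ! i \<notin> ?V)"
  have "snd (span_tree tree Q) = span_edges tree Q"
    by (simp add: span_tree_def)
  then have "restrict_tree tree Q = (?V, {{u, w} |u w. u \<in> ?V \<and> w \<in> ?V \<and> u \<noteq> w \<and> ?P u w})"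
    unfolding restrict_tree_def Let_def by (simp only: branching_vertices_quartet)
  moreover have "{{u, w} |u w. u \<in> ?V \<and> w \<in> ?V \<and> u \<noteq> w \<and> ?P u w} = quartet_edges a b c d"
  proof (rule set_eqI, rule iffI)
    fix e assume "e \<in> {{u, w} |u w. u \<in> ?V \<and> w \<in> ?V \<and> u \<noteq> w \<and> ?P u w}"
    then obtain u w where uw: "e = {u, w}" "u \<in> ?V" "w \<in> ?V" "u \<noteq> w" "?P u w"
      by blast
    then have "u \<in> vertices" "w \<in> vertices"
      using quartet_vertices_subset by auto
    with uw(5) have "path_edges (tree_path u w) \<subseteq> span_edges tree Q \<and>
        (\<forall>v\<in>set (tree_path u w). v \<noteq> u \<longrightarrow> v \<noteq> w \<longrightarrow> v \<notin> ?V)"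
      using restricted_path_iff[OF span_edges_quartet_subset] by blast
    then show "e \<in> quartet_edges a b c d"
      using restricted_edge_in_quartet_edges[OF uw(2-4)] uw(1) by blast
  next
    fix e assume "e \<in> quartet_edges a b c d"
    then obtain u w where uw: "e = {u, w}" "u \<in> ?V" "w \<in> ?V" "u \<noteq> w"
      and path: "path_edges (tree_path u w) \<subseteq> span_edges tree Q \<and>
        (\<forall>v\<in>set (tree_path u w). v \<noteq> u \<longrightarrow> v \<noteq> w \<longrightarrow> v \<notin> ?V)"
      using quartet_edge_restricted by blast
    then have "u \<in> vertices" "w \<in> vertices"
      using quartet_vertices_subset by auto
    with path have "?P u w"
      using restricted_path_iff[OF span_edges_quartet_subset] by blast
    then show "e \<in> {{u, w} |u w. u \<in> ?V \<and> w \<in> ?V \<and> u \<noteq> w \<and> ?P u w}"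
      using uw by blast
  qed
  ultimately show ?thesis
    by simp
qed

lemma restrict_tree_quartet_has_cherry:
  "has_cherry (restrict_tree tree Q) a b" "has_cherry (restrict_tree tree Q) c d"
  by (auto simp: has_cherry_def restrict_tree_quartet quartet_vertices_def quartet_edges_def
      insert_commute)

lemma tree_iso_restrict_quartet: "tree_iso (restrict_tree tree Q) (quartet_tree a b c d)"
proof -
  define f :: "nat vert \<Rightarrow> nat vert" where
    "f v = (if v = Inr (anchor b) then Inr 0 else if v = Inr (anchor c) then Inr 1 else v)" for v
  have "anchor b \<noteq> anchor c"
    using anchor_b_less_c by simp
  then have fB: "f (Inr (anchor b)) = Inr 0" and fC: "f (Inr (anchor c)) = Inr 1"
    and fL: "\<And>x. f (Inl x) = Inl x"
    by (auto simp: f_def)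
  have inj: "inj_on f (quartet_vertices a b c d)"
    unfolding quartet_vertices_def inj_on_def using \<open>anchor b \<noteq> anchor c\<close> by (auto simp: f_def)
  have "f ` quartet_vertices a b c d = fst (quartet_tree a b c d)"
    unfolding quartet_vertices_def quartet_tree_def by (simp add: fB fC fL)
  moreover have "{u, v} \<in> quartet_edges a b c d \<longleftrightarrow> {f u, f v} \<in> snd (quartet_tree a b c d)"
    if "u \<in> quartet_vertices a b c d" "v \<in> quartet_vertices a b c d" for u v
  proof -
    have "(image f) ` quartet_edges a b c d = snd (quartet_tree a b c d)"
      unfolding quartet_edges_def quartet_tree_def by (simp add: fB fC fL)
    moreover have "quartet_edges a b c d \<subseteq> Pow (quartet_vertices a b c d)"
      unfolding quartet_edges_def quartet_vertices_def by auto
    moreover have "{f u, f v} = f ` {u, v}"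
      by simp
    ultimately show ?thesis
      using inj_on_image_mem_iff[OF inj_on_image_Pow[OF inj], of "{u, v}" "quartet_edges a b c d"]
        that
      by auto
  qed
  ultimately show ?thesis
    unfolding tree_iso_def restrict_tree_quartet fst_conv snd_conv
    using inj fL by (intro exI[of _ f]) (auto simp: bij_betw_def)
qed

lemma restrict_tree_quartet_cherry:
  assumes "has_cherry (restrict_tree tree Q) x y" "x \<noteq> y"
  shows "{x, y} = {a, b} \<or> {x, y} = {c, d}"
proof -
  obtain v where v: "{v, Inl x} \<in> quartet_edges a b c d" "{v, Inl y} \<in> quartet_edges a b c d"
    using assms(1) by (auto simp: has_cherry_def restrict_tree_quartet)
  have neighbour: "(v = Inr (anchor b) \<and> (z = a \<or> z = b)) \<or> (v = Inr (anchor c) \<and> (z = c \<or> z = d))"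
    if "{v, Inl z} \<in> quartet_edges a b c d" for z
    using that unfolding quartet_edges_def by (auto simp: doubleton_eq_iff)
  have "anchor b \<noteq> anchor c"
    using anchor_b_less_c by simp
  then show ?thesis
    using neighbour[OF v(1)] neighbour[OF v(2)] assms(2) by auto
qed

lemma L_edges_quartet: "L_edges tree Q = span_edges tree {a, b} \<union> span_edges tree {c, d}"
proof
  show "span_edges tree {a, b} \<union> span_edges tree {c, d} \<subseteq> L_edges tree Q"
    unfolding L_edges_def using tree_iso_restrict_quartet by blast
next
  show "L_edges tree Q \<subseteq> span_edges tree {a, b} \<union> span_edges tree {c, d}"
  proof
    fix e assume "e \<in> L_edges tree Q"
    then obtain a' b' c' d' where Q': "Q = {a', b', c', d'}"
      and iso: "tree_iso (restrict_tree tree Q) (quartet_tree a' b' c' d')"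
      and e: "e \<in> span_edges tree {a', b'} \<union> span_edges tree {c', d'}"
      unfolding L_edges_def by blast
    have card4: "card {a', b', c', d'} = 4"
      using card_quartet unfolding Q' .
    have "a' \<noteq> b'" "c' \<noteq> d'"
      using card_4_distinct[OF card4] by simp_all
    have leaf: "Inl z \<in> fst (restrict_tree tree Q)" if "z \<in> Q" for z
      using that by (simp add: restrict_tree_quartet quartet_vertices_def)
    have "has_cherry (restrict_tree tree Q) a' b'" "has_cherry (restrict_tree tree Q) c' d'"
      using tree_iso_has_cherry_iff[OF iso leaf leaf] has_cherry_quartet_tree Q' by simp_all
    then have "{a', b'} \<in> {{a, b}, {c, d}}" "{c', d'} \<in> {{a, b}, {c, d}}"
      using restrict_tree_quartet_cherry \<open>a' \<noteq> b'\<close> \<open>c' \<noteq> d'\<close> by blast+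
    then show "e \<in> span_edges tree {a, b} \<union> span_edges tree {c, d}"
      using e by auto
  qed
qed

lemma pendant_in_L_edges: "x \<in> Q \<Longrightarrow> pendant x \<in> L_edges tree Q"
  unfolding L_edges_quartet
  using span_edges_pair[of a b] span_edges_pair[of c d] leaves_less leaves_distinct by auto

end

context caterpillar begin

lemma caterpillar_quartetI: "ordered_quartet a b c d \<Longrightarrow> caterpillar_quartet n pos a b c d"
  by (simp add: caterpillar_quartet_def caterpillar_quartet_axioms_def caterpillar_axioms)

lemma obtain_ordered_quartet:
  assumes "Q \<subseteq> {0..<n}" "card Q = 4"
  obtains a b c d where "Q = {a, b, c, d}" "ordered_quartet a b c d"
proof -
  have inj: "inj_on pos Q"
    using inj_on_pos assms(1) by (rule inj_on_subset)
  have "finite Q"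
    using assms(2) by (simp add: card_ge_0_finite)
  define xs where "xs = sorted_list_of_set (pos ` Q)"
  have xs: "set xs = pos ` Q" "length xs = 4" "sorted_wrt (<) xs"
    using \<open>finite Q\<close> card_image[OF inj] assms(2) by (simp_all add: xs_def strict_sorted_list_of_set)
  obtain A B C D where ABCD: "xs = [A, B, C, D]"
    using xs(2) by (auto simp: numeral_eq_Suc length_Suc_conv)
  have "pos ` Q = {A, B, C, D}"
    using xs(1) ABCD by simp
  define leaf where "leaf Y = inv_into Q pos Y" for Y
  have leaf: "leaf Y \<in> Q" "pos (leaf Y) = Y" if "Y \<in> {A, B, C, D}" for Y
    using inv_into_into[of Y pos Q] f_inv_into_f[of Y pos Q] that \<open>pos ` Q = {A, B, C, D}\<close>
    by (simp_all add: leaf_def)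
  have sub: "leaf ` {A, B, C, D} \<subseteq> Q"
    using leaf(1) by blast
  have "pos ` leaf ` {A, B, C, D} = pos ` Q"
    using leaf(2) \<open>pos ` Q = {A, B, C, D}\<close> by simp
  then have "leaf ` {A, B, C, D} = Q"
    using inj_on_image_eq_iff[OF inj sub order_refl] by blast
  then have Q_eq: "Q = {leaf A, leaf B, leaf C, leaf D}"
    by auto
  have "A < B" "B < C" "C < D"
    using xs(3) ABCD by auto
  moreover have "leaf Y < n" if "Y \<in> {A, B, C, D}" for Y
    using leaf(1)[OF that] assms(1) by auto
  ultimately have "ordered_quartet (leaf A) (leaf B) (leaf C) (leaf D)"
    using leaf(2) by (simp add: ordered_quartet_def)
  with Q_eq show thesis
    using that by blast
qed

lemma restrict_tree_cherry_separates:
  assumes Q: "Q \<subseteq> {0..<n}" "card Q = 4" and xy: "x \<in> Q" "y \<in> Q" "x \<noteq> y"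
    and cherry: "has_cherry (restrict_tree tree Q) x y"
  shows "(\<forall>z\<in>Q - {x, y}. pos x < pos z \<and> pos y < pos z) \<or>
         (\<forall>z\<in>Q - {x, y}. pos z < pos x \<and> pos z < pos y)"
proof -
  obtain a b c d where abcd: "Q = {a, b, c, d}" "ordered_quartet a b c d"
    using obtain_ordered_quartet[OF Q] .
  interpret q: caterpillar_quartet n pos a b c d
    by (rule caterpillar_quartetI[OF abcd(2)])
  have "{x, y} = {a, b} \<or> {x, y} = {c, d}"
    using q.restrict_tree_quartet_cherry cherry xy(3) abcd(1) by simp
  then show ?thesis
  proof
    assume xy: "{x, y} = {a, b}"
    have "Q - {x, y} = {c, d}"
      unfolding abcd(1) xy using q.leaves_distinct by auto
    moreover have "x \<in> {a, b}" "y \<in> {a, b}"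
      unfolding xy[symmetric] by simp_all
    ultimately show ?thesis
      using q.pos_increasing by (intro disjI1) (simp, elim disjE, simp_all)
  next
    assume xy: "{x, y} = {c, d}"
    have "Q - {x, y} = {a, b}"
      unfolding abcd(1) xy using q.leaves_distinct by auto
    moreover have "x \<in> {c, d}" "y \<in> {c, d}"
      unfolding xy[symmetric] by simp_all
    ultimately show ?thesis
      using q.pos_increasing by (intro disjI2) (simp, elim disjE, simp_all)
  qed
qed

lemma pendants_subset_L_edges:
  assumes "Q \<subseteq> {0..<n}" "card Q = 4"
  shows "pendant ` Q \<subseteq> L_edges tree Q"
proof -
  obtain a b c d where abcd: "Q = {a, b, c, d}" "ordered_quartet a b c d"
    using obtain_ordered_quartet[OF assms] .
  interpret q: caterpillar_quartet n pos a b c d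
    by (rule caterpillar_quartetI[OF abcd(2)])
  show ?thesis
    using abcd(1) q.pendant_in_L_edges by auto
qed

end

section \<open>Row-major and column-major order on a square grid\<close>

lemma sum_card_disjoint_le:
  assumes "finite S" "finite U" "\<And>i. i \<in> S \<Longrightarrow> A i \<subseteq> U"
    and "\<And>i j. i \<in> S \<Longrightarrow> j \<in> S \<Longrightarrow> i \<noteq> j \<Longrightarrow> A i \<inter> A j = {}"
  shows "(\<Sum>i\<in>S. card (A i)) \<le> card U"
proof -
  have "(\<Sum>i\<in>S. card (A i)) = card (\<Union>i\<in>S. A i)"
    using assms by (intro card_UN_disjoint[symmetric]) (auto intro: finite_subset)
  also have "\<dots> \<le> card U"
    using assms by (intro card_mono) auto
  finally show ?thesis .
qed

definition between :: "nat \<Rightarrow> nat \<Rightarrow> nat set" where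
  "between x y = {min x y..max x y}"

lemma int_card_between: "int (card (between x y)) = \<bar>int x - int y\<bar> + 1"
  by (cases "x \<le> y") (simp_all add: between_def of_nat_diff)

text \<open>Position i of an m x m grid in row-major order is position grid_transpose m i in
  column-major order.\<close>

definition grid_transpose :: "nat \<Rightarrow> nat \<Rightarrow> nat" where
  "grid_transpose m i = (i mod m) * m + i div m"

lemma grid_transpose_less:
  assumes "0 < m" "i < m * m"
  shows "grid_transpose m i < m * m"
proof -
  have "i div m < m"
    using assms by (simp add: div_less_iff_less_mult)
  then have "grid_transpose m i < (i mod m + 1) * m"
    by (simp add: grid_transpose_def)
  also have "\<dots> \<le> m * m"
    using mod_less_divisor[OF assms(1), of i] by (intro mult_right_mono) simp_all
  finally show ?thesis .
qed

lemma grid_transpose_grid_transpose: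
  assumes "0 < m" "i < m * m"
  shows "grid_transpose m (grid_transpose m i) = i"
proof -
  have "i div m < m"
    using assms by (simp add: div_less_iff_less_mult)
  then have "grid_transpose m i mod m = i div m" "grid_transpose m i div m = i mod m"
    using assms by (simp_all add: grid_transpose_def)
  then show ?thesis
    by (simp add: grid_transpose_def[of m "grid_transpose m i"])
qed

lemma bij_betw_grid_transpose: "0 < m \<Longrightarrow> bij_betw (grid_transpose m) {0..<m * m} {0..<m * m}"
  by (rule bij_betw_byWitness[where f' = "grid_transpose m"])
    (auto simp: grid_transpose_less grid_transpose_grid_transpose)

lemma grid_spread_int:
  fixes M q r q' r' :: int
  assumes M: "2 \<le> M" and bounds: "0 \<le> r" "r < M" "0 \<le> r'" "r' < M"
    and less: "q * M + r < q' * M + r'"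
  shows "M \<le> (q' * M + r') - (q * M + r) + \<bar>(r' * M + q') - (r * M + q)\<bar>"
proof -
  have "q \<le> q'"
  proof (rule ccontr)
    assume "\<not> q \<le> q'"
    then have "(q' + 1) * M \<le> q * M"
      using M by (intro mult_right_mono) auto
    then show False
      using less bounds by (simp add: algebra_simps)
  qed
  consider "q = q'" | "q < q'" "r \<le> r'" | "q < q'" "r' < r"
    using \<open>q \<le> q'\<close> by linarith
  then show ?thesis
  proof cases
    case 1
    then have "1 * M \<le> (r' - r) * M"
      using less M by (intro mult_right_mono) auto
    then show ?thesis
      using 1 less by (simp add: algebra_simps)
  next
    case 2
    then have "1 * M \<le> (q' - q) * M"
      using M by (intro mult_right_mono) auto
    then show ?thesis
      using 2 by (simp add: algebra_simps)
  next
    case 3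
    then have "1 * (M - 1) \<le> (q' - q) * (M - 1)" "1 * (M - 1) \<le> (r - r') * (M - 1)"
      using M by (intro mult_right_mono; simp)+
    moreover have "(q' * M + r') - (q * M + r) + ((r * M + q) - (r' * M + q')) =
        (q' - q) * (M - 1) + (r - r') * (M - 1)"
      by (simp add: algebra_simps)
    ultimately have "2 * (M - 1) \<le> (q' * M + r') - (q * M + r) + ((r * M + q) - (r' * M + q'))"
      by linarith
    then show ?thesis
      using M by (smt (verit) abs_ge_minus_self)
  qed
qed

lemma grid_transpose_spread:
  assumes "2 \<le> m" "i < i'" "i' < m * m"
  shows "m \<le> card (between i i') + card (between (grid_transpose m i) (grid_transpose m i'))"
proof -
  let ?t = "grid_transpose m"
  have m: "2 \<le> int m"
    using assms(1) by simp
  have split: "int k = int (k div m) * int m + int (k mod m)"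
    "int (?t k) = int (k mod m) * int m + int (k div m)" for k
    by (simp_all add: grid_transpose_def flip: of_nat_mult of_nat_add)
  have bounds: "0 \<le> int (k mod m)" "int (k mod m) < int m" for k
    using assms(1) by simp_all
  have "int (i div m) * int m + int (i mod m) < int (i' div m) * int m + int (i' mod m)"
    using assms(2) by (simp flip: split(1))
  from grid_spread_int[OF m bounds bounds this]
  have "int m \<le> (int i' - int i) + \<bar>int (?t i') - int (?t i)\<bar>"
    by (simp only: split[symmetric])
  moreover have "int (card (between i i')) = int i' - int i + 1"
    using int_card_between[of i i'] assms(2) by simp
  moreover have "int (card (between (?t i) (?t i'))) = \<bar>int (?t i') - int (?t i)\<bar> + 1"
    using int_card_between by (simp add: abs_minus_commute)
  ultimately show ?thesis
    by linarith
qed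

text \<open>Each pair spans at least m positions in row-major plus column-major order, so at most
  2m pairs can have pairwise disjoint spans in both orders.\<close>

lemma card_grid_disjoint_pairs_le:
  fixes lo hi :: "nat \<Rightarrow> nat"
  assumes "finite S" "2 \<le> m"
    and pair: "\<And>j. j \<in> S \<Longrightarrow> lo j < hi j \<and> hi j < m * m"
    and rows: "\<And>j j'. j \<in> S \<Longrightarrow> j' \<in> S \<Longrightarrow> j \<noteq> j' \<Longrightarrow>
      between (lo j) (hi j) \<inter> between (lo j') (hi j') = {}"
    and cols: "\<And>j j'. j \<in> S \<Longrightarrow> j' \<in> S \<Longrightarrow> j \<noteq> j' \<Longrightarrow>
      between (grid_transpose m (lo j)) (grid_transpose m (hi j)) \<inter>
      between (grid_transpose m (lo j')) (grid_transpose m (hi j')) = {}"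
  shows "card S \<le> 2 * m"
proof -
  let ?row = "\<lambda>j. between (lo j) (hi j)"
  let ?col = "\<lambda>j. between (grid_transpose m (lo j)) (grid_transpose m (hi j))"
  have "card S * m \<le> (\<Sum>j\<in>S. card (?row j) + card (?col j))"
    using sum_mono[of S "\<lambda>_. m"] grid_transpose_spread[OF \<open>2 \<le> m\<close>] pair by simp
  also have "\<dots> = (\<Sum>j\<in>S. card (?row j)) + (\<Sum>j\<in>S. card (?col j))"
    by (rule sum.distrib)
  also have "\<dots> \<le> card {0..<m * m} + card {0..<m * m}"
  proof (rule add_mono)
    show "(\<Sum>j\<in>S. card (?row j)) \<le> card {0..<m * m}"
    proof (rule sum_card_disjoint_le)
      show "?row j \<subseteq> {0..<m * m}" if "j \<in> S" for j
        using pair[OF that] by (auto simp: between_def)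
    qed (simp_all add: assms(1) rows)
    show "(\<Sum>j\<in>S. card (?col j)) \<le> card {0..<m * m}"
    proof (rule sum_card_disjoint_le)
      show "?col j \<subseteq> {0..<m * m}" if "j \<in> S" for j
        using pair[OF that] grid_transpose_less[of m "lo j"] grid_transpose_less[of m "hi j"]
          \<open>2 \<le> m\<close>
        by (auto simp: between_def)
    qed (simp_all add: assms(1) cols)
  qed
  also have "\<dots> = (2 * m) * m"
    by simp
  finally have "card S * m \<le> (2 * m) * m" .
  then show ?thesis
    by (rule mult_right_le_imp_le) (use \<open>2 \<le> m\<close> in simp)
qed

section \<open>The integer program and its relaxation\<close>

lemma opt_frac_le_feasible:
  assumes "lp_feasible X T1 T2 x"
  shows "opt_frac X T1 T2 \<le> (\<Sum>e\<in>snd T1. x e)"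
  unfolding opt_frac_def
proof (rule cInf_lower)
  show "(\<Sum>e\<in>snd T1. x e) \<in> {\<Sum>e\<in>snd T1. x e |x. lp_feasible X T1 T2 x}"
    using assms by blast
  show "bdd_below {\<Sum>e\<in>snd T1. x e |x. lp_feasible X T1 T2 x}"
    by (rule bdd_belowI[of _ 0]) (auto simp: lp_feasible_def intro: sum_nonneg)
qed

lemma opt_frac_ge_lower_bound:
  assumes "lp_feasible X T1 T2 x" "\<And>y. lp_feasible X T1 T2 y \<Longrightarrow> c \<le> (\<Sum>e\<in>snd T1. y e)"
  shows "c \<le> opt_frac X T1 T2"
  unfolding opt_frac_def using assms by (intro cInf_greatest) auto

lemma opt_int_ge_lower_bound:
  assumes "ip_feasible X T1 T2 x" "\<And>y. ip_feasible X T1 T2 y \<Longrightarrow> c \<le> (\<Sum>e\<in>snd T1. y e)"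
  shows "c \<le> opt_int X T1 T2"
  unfolding opt_int_def using assms by (intro cInf_greatest) auto

lemma ip_feasible_hits_L_edges:
  assumes feasible: "ip_feasible X T1 T2 x" and Q: "Q \<in> incompatible_quartets X T1 T2"
  shows "L_edges T1 Q \<inter> {e \<in> snd T1. x e = 1} \<noteq> {}"
proof
  assume none: "L_edges T1 Q \<inter> {e \<in> snd T1. x e = 1} = {}"
  have "x e = 0" if "e \<in> L_edges T1 Q" for e
  proof -
    have "e \<in> snd T1"
      using L_edges_subset that by blast
    then have "x e \<in> {0, 1}" "x e \<noteq> 1"
      using feasible none that by (auto simp: ip_feasible_def)
    then show ?thesis
      by simp
  qed
  then have "(\<Sum>e\<in>L_edges T1 Q. x e) = 0"
    by simp
  moreover have "1 \<le> (\<Sum>e\<in>L_edges T1 Q. x e)"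
    using feasible Q by (simp add: ip_feasible_def)
  ultimately show False
    by simp
qed

lemma sum_zero_one_eq_card:
  assumes "finite E" "\<And>e. e \<in> E \<Longrightarrow> x e \<in> {0, 1}"
  shows "(\<Sum>e\<in>E. x e) = real (card {e \<in> E. x e = 1})"
proof -
  have "(\<Sum>e\<in>E. x e) = (\<Sum>e\<in>{e \<in> E. x e = 1}. 1)"
    by (rule sum.mono_neutral_cong_right) (use assms in auto)
  then show ?thesis
    by simp
qed

lemma quotient_lower_bound:
  fixes M f i :: real
  assumes "5 \<le> M" "0 < f" "f \<le> M * M / 4" "M * M - 4 * M - 1 \<le> i"
  shows "4 - 20 / M \<le> i / f"
proof -
  have "0 \<le> M * M - 4 * M - 1"
    using mult_right_mono[OF assms(1), of M] assms(1) by linarith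
  have "4 - 20 / M = (4 * M * M - 20 * M) / (M * M)"
    using assms(1) by (simp add: field_simps)
  also have "\<dots> \<le> (M * M - 4 * M - 1) / (M * M / 4)"
    using assms(1) by (simp add: field_simps)
  also have "\<dots> \<le> (M * M - 4 * M - 1) / f"
  proof (rule divide_left_mono)
    show "0 < M * M / 4 * f"
      using assms(1,2) by (intro mult_pos_pos) auto
  qed (use assms(3) \<open>0 \<le> M * M - 4 * M - 1\<close> in auto)
  also have "\<dots> \<le> i / f"
    using assms(2,4) by (simp add: divide_right_mono)
  finally show ?thesis .
qed

section \<open>The two caterpillars on a square grid\<close>

locale grid_pair =
  fixes m :: nat
  assumes m_ge_5: "5 \<le> m"
begin

abbreviation leaves :: "nat set" where
  "leaves \<equiv> {0..<m * m}"

lemma four_le_card_leaves: "4 \<le> m * m"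
  using mult_le_mono[OF m_ge_5 m_ge_5] by simp

sublocale T1: caterpillar "m * m" id
  using four_le_card_leaves by unfold_locales simp_all

sublocale T2: caterpillar "m * m" "grid_transpose m"
  using four_le_card_leaves bij_betw_grid_transpose m_ge_5 by unfold_locales simp_all

lemma caterpillar_quartet_T1:
  "a < b \<Longrightarrow> b < c \<Longrightarrow> c < d \<Longrightarrow> d < m * m \<Longrightarrow> caterpillar_quartet (m * m) id a b c d"
  by (rule T1.caterpillar_quartetI) (simp add: T1.ordered_quartet_def)

text \<open>A quartet a < b < c < d is split ab|cd by the row-major caterpillar; if the
  column-major one agrees, the cherry {a, b} lies on one side of {c, d} in column-major order.\<close>

lemma compatible_quartet_grid_separated:
  assumes abcd: "a < b" "b < c" "c < d" "d < m * m"
    and iso: "tree_iso (restrict_tree T1.tree {a, b, c, d}) (restrict_tree T2.tree {a, b, c, d})"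
  shows "(\<forall>z\<in>{c, d}.
      grid_transpose m a < grid_transpose m z \<and> grid_transpose m b < grid_transpose m z) \<or>
    (\<forall>z\<in>{c, d}.
      grid_transpose m z < grid_transpose m a \<and> grid_transpose m z < grid_transpose m b)"
proof -
  interpret q: caterpillar_quartet "m * m" id a b c d
    using caterpillar_quartet_T1[OF abcd] .
  have "Inl a \<in> fst (restrict_tree T1.tree {a, b, c, d})"
    "Inl b \<in> fst (restrict_tree T1.tree {a, b, c, d})"
    by (simp_all add: q.restrict_tree_quartet T1.quartet_vertices_def)
  then have cherry: "has_cherry (restrict_tree T2.tree {a, b, c, d}) a b"
    using tree_iso_has_cherry_iff[OF iso] q.restrict_tree_quartet_has_cherry(1) by blast
  have "{a, b, c, d} \<subseteq> leaves" "a \<noteq> b"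
    using abcd by auto
  from T2.restrict_tree_cherry_separates[OF this(1) q.card_quartet _ _ this(2) cherry]
  have "(\<forall>z\<in>{a, b, c, d} - {a, b}.
          grid_transpose m a < grid_transpose m z \<and> grid_transpose m b < grid_transpose m z) \<or>
        (\<forall>z\<in>{a, b, c, d} - {a, b}.
          grid_transpose m z < grid_transpose m a \<and> grid_transpose m z < grid_transpose m b)"
    by simp
  moreover have "{a, b, c, d} - {a, b} = {c, d}"
    using abcd by auto
  ultimately show ?thesis
    by simp
qed

lemma incompatible_square_quartet: "{0, 1, m, m + 1} \<in> incompatible_quartets leaves T1.tree T2.tree"
proof -
  have "m + 1 < m * m"
    using mult_le_mono2[of 2 m m] m_ge_5 by linarith
  have "(m + 1) div m = 1" "(m + 1) mod m = 1"
    using m_ge_5 by (subst div_add_self1 mod_add_self1; simp)+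
  then have transposes: "grid_transpose m 0 = 0" "grid_transpose m 1 = m" "grid_transpose m m = 1"
    "grid_transpose m (m + 1) = m + 1"
    using m_ge_5 by (simp_all add: grid_transpose_def)
  let ?Q = "{0, 1, m, m + 1}"
  have "\<not> tree_iso (restrict_tree T1.tree ?Q) (restrict_tree T2.tree ?Q)"
  proof
    assume "tree_iso (restrict_tree T1.tree ?Q) (restrict_tree T2.tree ?Q)"
    from compatible_quartet_grid_separated[OF _ _ _ \<open>m + 1 < m * m\<close> this]
    show False
      using transposes m_ge_5 by simp
  qed
  then show ?thesis
    using \<open>m + 1 < m * m\<close> m_ge_5 by (simp add: incompatible_quartets_def)
qed

text \<open>Every L(Q) contains the four pendant edges of Q.\<close>

lemma lp_feasible_quarter_pendants:
  "lp_feasible leaves T1.tree T2.tree (\<lambda>e. if e \<in> T1.pendant ` leaves then 1 / 4 else 0)"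
  (is "lp_feasible _ _ _ ?x")
  unfolding lp_feasible_def
proof (intro conjI ballI)
  fix Q assume "Q \<in> incompatible_quartets leaves T1.tree T2.tree"
  then have Q: "Q \<subseteq> leaves" "card Q = 4"
    by (simp_all add: incompatible_quartets_def)
  have "inj_on T1.pendant Q"
    using T1.inj_pendant by (rule inj_on_subset) simp
  then have "(\<Sum>e\<in>T1.pendant ` Q. ?x e) = (\<Sum>i\<in>Q. ?x (T1.pendant i))"
    by (rule sum.reindex_cong) simp_all
  also have "\<dots> = (\<Sum>i\<in>Q. 1 / 4)"
    using Q(1) by (intro sum.cong) auto
  also have "\<dots> = 1"
    using Q(2) by simp
  finally have "1 = (\<Sum>e\<in>T1.pendant ` Q. ?x e)" ..
  also have "\<dots> \<le> (\<Sum>e\<in>L_edges T1.tree Q. ?x e)"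
    using L_edges_subset[of T1.tree Q] T1.finite_edges T1.pendants_subset_L_edges[OF Q]
    by (intro sum_mono2) (auto simp: T1.snd_tree intro: finite_subset)
  finally show "1 \<le> (\<Sum>e\<in>L_edges T1.tree Q. ?x e)" .
qed simp

lemma opt_frac_le_quarter: "opt_frac leaves T1.tree T2.tree \<le> real (m * m) / 4"
proof -
  let ?x = "\<lambda>e. if e \<in> T1.pendant ` leaves then 1 / 4 else 0 :: real"
  have "(\<Sum>e\<in>T1.edges. ?x e) = (\<Sum>e\<in>T1.pendant ` leaves. 1 / 4)"
    by (rule sum.mono_neutral_cong_right) (auto simp: T1.finite_edges T1.edges_def)
  also have "\<dots> = real (m * m) / 4"
    using T1.inj_pendant by (simp add: card_image inj_on_subset)
  finally show ?thesis
    using opt_frac_le_feasible[OF lp_feasible_quarter_pendants] by (simp add: T1.snd_tree)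
qed

lemma one_le_opt_frac: "1 \<le> opt_frac leaves T1.tree T2.tree"
proof (rule opt_frac_ge_lower_bound[OF lp_feasible_quarter_pendants])
  fix x assume x: "lp_feasible leaves T1.tree T2.tree x"
  let ?Q = "{0, 1, m, m + 1}"
  have "1 \<le> (\<Sum>e\<in>L_edges T1.tree ?Q. x e)"
    using x incompatible_square_quartet by (simp add: lp_feasible_def)
  also have "\<dots> \<le> (\<Sum>e\<in>T1.edges. x e)"
    using x L_edges_subset[of T1.tree ?Q]
    by (intro sum_mono2[OF T1.finite_edges]) (auto simp: lp_feasible_def T1.snd_tree)
  finally show "1 \<le> (\<Sum>e\<in>snd T1.tree. x e)"
    by (simp add: T1.snd_tree)
qed

end

section \<open>Hitting sets\<close>

text \<open>F stands for the support of an integral solution. Two intact steps that are not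
  adjacent form a quartet that F does not hit, hence a compatible one.\<close>

locale grid_hitting_set = grid_pair +
  fixes F :: "nat vert set set"
  assumes F_subset: "F \<subseteq> T1.edges"
    and F_hits: "\<And>Q. Q \<in> incompatible_quartets leaves T1.tree T2.tree \<Longrightarrow>
      L_edges T1.tree Q \<inter> F \<noteq> {}"
begin

definition uncut :: "nat set" where
  "uncut = {i \<in> leaves. T1.pendant i \<notin> F}"

definition cut_spine :: "nat set" where
  "cut_spine = {k \<in> {1..<m * m - 2}. spine_edge k \<in> F}"

lemma finite_uncut: "finite uncut"
  by (simp add: uncut_def)

lemma finite_cut_spine: "finite cut_spine"
  by (simp add: cut_spine_def)

lemma card_F_ge: "m * m + card cut_spine \<le> card uncut + card F"
proof -
  let ?cut = "T1.pendant ` (leaves - uncut) \<union> spine_edge ` cut_spine"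
  have "finite F"
    using F_subset T1.finite_edges by (rule finite_subset)
  have "?cut \<subseteq> F"
    by (auto simp: uncut_def cut_spine_def)
  then have "card ?cut \<le> card F"
    using \<open>finite F\<close> by (rule card_mono[rotated])
  have "inj_on T1.pendant (leaves - uncut)"
    using T1.inj_pendant by (rule inj_on_subset) simp
  moreover have "inj_on (spine_edge :: nat \<Rightarrow> nat vert set) cut_spine"
    using T1.inj_spine_edge by (rule inj_on_subset) simp
  moreover have "T1.pendant ` (leaves - uncut) \<inter> spine_edge ` cut_spine = {}"
    using T1.pendant_neq_spine_edge by auto
  ultimately have "card ?cut = card (leaves - uncut) + card cut_spine"
    by (simp add: card_Un_disjoint finite_cut_spine card_image)
  moreover have "uncut \<subseteq> leaves"
    by (auto simp: uncut_def)
  then have "card (leaves - uncut) = m * m - card uncut" "card uncut \<le> m * m"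
    using card_Diff_subset[OF finite_uncut] card_mono[of leaves uncut] by simp_all
  ultimately show ?thesis
    using \<open>card ?cut \<le> card F\<close> by linarith
qed

definition uncut_leaf :: "nat \<Rightarrow> nat" where
  "uncut_leaf j = sorted_list_of_set uncut ! j"

lemma uncut_leaf_strict_mono: "j < j' \<Longrightarrow> j' < card uncut \<Longrightarrow> uncut_leaf j < uncut_leaf j'"
  using sorted_wrt_nth_less[OF strict_sorted_list_of_set[of uncut]] finite_uncut
  by (simp add: uncut_leaf_def)

lemma uncut_leaf_in_uncut: "j < card uncut \<Longrightarrow> uncut_leaf j \<in> uncut"
  using finite_uncut nth_mem[of j "sorted_list_of_set uncut"] by (simp add: uncut_leaf_def)

lemma uncut_leaf_less: "j < card uncut \<Longrightarrow> uncut_leaf j < m * m"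
  using uncut_leaf_in_uncut by (auto simp: uncut_def)

definition spine_intact :: "nat \<Rightarrow> bool" where
  "spine_intact j \<longleftrightarrow>
     (\<forall>k. T1.anchor (uncut_leaf j) \<le> k \<and> k < T1.anchor (uncut_leaf (Suc j)) \<longrightarrow> k \<notin> cut_spine)"

definition intact_steps :: "nat set" where
  "intact_steps = {j. Suc j < card uncut \<and> spine_intact j}"

definition broken_steps :: "nat set" where
  "broken_steps = {j. Suc j < card uncut \<and> \<not> spine_intact j}"

lemma uncovered_quartet_compatible:
  assumes abcd: "a < b" "b < c" "c < d" "d < m * m"
    and uncut: "a \<in> uncut" "b \<in> uncut" "c \<in> uncut" "d \<in> uncut"
    and intact_ab: "\<And>k. T1.anchor a \<le> k \<Longrightarrow> k < T1.anchor b \<Longrightarrow> k \<notin> cut_spine"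
    and intact_cd: "\<And>k. T1.anchor c \<le> k \<Longrightarrow> k < T1.anchor d \<Longrightarrow> k \<notin> cut_spine"
  shows "tree_iso (restrict_tree T1.tree {a, b, c, d}) (restrict_tree T2.tree {a, b, c, d})"
proof -
  interpret q: caterpillar_quartet "m * m" id a b c d
    using caterpillar_quartet_T1[OF abcd] .
  have mono: "T1.anchor a \<le> T1.anchor b" "T1.anchor c \<le> T1.anchor d"
    using q.anchor_a_le_b q.anchor_c_le_d by simp_all
  have range: "1 \<le> T1.anchor a" "T1.anchor b \<le> m * m - 2" "1 \<le> T1.anchor c"
    "T1.anchor d \<le> m * m - 2"
    using T1.anchor_range abcd by auto
  have L: "L_edges T1.tree {a, b, c, d} =
      insert (T1.pendant a) (insert (T1.pendant b) (spine_edge ` {T1.anchor a..<T1.anchor b})) \<union>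
      insert (T1.pendant c) (insert (T1.pendant d) (spine_edge ` {T1.anchor c..<T1.anchor d}))"
    unfolding q.L_edges_quartet using T1.span_edges_pair[of a b] T1.span_edges_pair[of c d] abcd mono
    by (simp add: min_def max_def)
  have "T1.pendant z \<notin> F" if "z \<in> uncut" for z
    using that by (simp add: uncut_def)
  moreover have "spine_edge ` {T1.anchor a..<T1.anchor b} \<inter> F = {}"
    using intact_ab range by (auto simp: cut_spine_def)
  moreover have "spine_edge ` {T1.anchor c..<T1.anchor d} \<inter> F = {}"
    using intact_cd range by (auto simp: cut_spine_def)
  ultimately have "L_edges T1.tree {a, b, c, d} \<inter> F = {}"
    unfolding L using uncut by (simp add: Int_Un_distrib2)
  then have "{a, b, c, d} \<notin> incompatible_quartets leaves T1.tree T2.tree"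
    using F_hits by blast
  then show ?thesis
    using q.card_quartet abcd by (simp add: incompatible_quartets_def)
qed

text \<open>The first cut spine edge of a broken step lies between its two uncut leaves, so
  distinct broken steps have distinct first cut edges.\<close>

lemma card_broken_steps_le: "card broken_steps \<le> card cut_spine"
proof -
  define first_cut where "first_cut j =
    (LEAST k. T1.anchor (uncut_leaf j) \<le> k \<and> k < T1.anchor (uncut_leaf (Suc j)) \<and> k \<in> cut_spine)"
    for j
  have first_cut: "T1.anchor (uncut_leaf j) \<le> first_cut j \<and>
      first_cut j < T1.anchor (uncut_leaf (Suc j)) \<and> first_cut j \<in> cut_spine"
    if "j \<in> broken_steps" for j
  proof -
    have "\<exists>k. T1.anchor (uncut_leaf j) \<le> k \<and> k < T1.anchor (uncut_leaf (Suc j)) \<and> k \<in> cut_spine"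
      using that by (auto simp: broken_steps_def spine_intact_def)
    then show ?thesis
      unfolding first_cut_def by (rule LeastI_ex)
  qed
  have less: "first_cut j < first_cut j'"
    if "j \<in> broken_steps" "j' \<in> broken_steps" "j < j'" for j j'
  proof -
    have "j' < card uncut" "Suc j < card uncut"
      using that by (auto simp: broken_steps_def)
    then have "uncut_leaf (Suc j) \<le> uncut_leaf j'"
      using uncut_leaf_strict_mono[of "Suc j" j'] \<open>j < j'\<close> by (cases "Suc j = j'") auto
    then have "T1.anchor (uncut_leaf (Suc j)) \<le> T1.anchor (uncut_leaf j')"
      using T1.anchor_mono uncut_leaf_less \<open>j' < card uncut\<close> \<open>Suc j < card uncut\<close> by simp
    then show ?thesis
      using first_cut[OF that(1)] first_cut[OF that(2)] by linarith
  qed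
  have "inj_on first_cut broken_steps"
    by (rule inj_onI) (metis less less_irrefl linorder_neqE_nat)
  moreover have "first_cut ` broken_steps \<subseteq> cut_spine"
    using first_cut by auto
  ultimately show ?thesis
    using finite_cut_spine by (rule card_inj_on_le)
qed

lemma intact_steps_columns_disjoint:
  assumes "j \<in> intact_steps" "j' \<in> intact_steps" "Suc j < j'"
  shows "between (grid_transpose m (uncut_leaf j)) (grid_transpose m (uncut_leaf (Suc j))) \<inter>
    between (grid_transpose m (uncut_leaf j')) (grid_transpose m (uncut_leaf (Suc j'))) = {}"
proof -
  have "Suc j' < card uncut"
    using assms(2) by (simp add: intact_steps_def)
  then have ordered: "uncut_leaf j < uncut_leaf (Suc j)" "uncut_leaf (Suc j) < uncut_leaf j'"
    "uncut_leaf j' < uncut_leaf (Suc j')" "uncut_leaf (Suc j') < m * m"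
    using uncut_leaf_strict_mono assms(3) uncut_leaf_less by auto
  let ?Q = "{uncut_leaf j, uncut_leaf (Suc j), uncut_leaf j', uncut_leaf (Suc j')}"
  have "tree_iso (restrict_tree T1.tree ?Q) (restrict_tree T2.tree ?Q)"
    using assms \<open>Suc j' < card uncut\<close>
    by (intro uncovered_quartet_compatible[OF ordered] uncut_leaf_in_uncut)
      (auto simp: intact_steps_def spine_intact_def)
  from compatible_quartet_grid_separated[OF ordered this]
  show ?thesis
    by (auto simp: between_def)
qed

lemma card_spaced_intact_steps_le:
  assumes S: "S \<subseteq> intact_steps"
    and spaced: "\<And>j j'. j \<in> S \<Longrightarrow> j' \<in> S \<Longrightarrow> j < j' \<Longrightarrow> Suc j < j'"
  shows "card S \<le> 2 * m"
proof (rule card_grid_disjoint_pairs_le[where lo = uncut_leaf and hi = "\<lambda>j. uncut_leaf (Suc j)"])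
  let ?row = "\<lambda>j. between (uncut_leaf j) (uncut_leaf (Suc j))"
  let ?col = "\<lambda>j. between (grid_transpose m (uncut_leaf j)) (grid_transpose m (uncut_leaf (Suc j)))"
  have "intact_steps \<subseteq> {..<card uncut}"
    by (auto simp: intact_steps_def)
  then show "finite S"
    using finite_subset[OF subset_trans[OF S]] by simp
  show "2 \<le> m"
    using m_ge_5 by simp
  show "uncut_leaf j < uncut_leaf (Suc j) \<and> uncut_leaf (Suc j) < m * m" if "j \<in> S" for j
    using S that uncut_leaf_strict_mono uncut_leaf_less by (auto simp: intact_steps_def)
  have disjoint: "?row j \<inter> ?row j' = {} \<and> ?col j \<inter> ?col j' = {}"
    if "j \<in> S" "j' \<in> S" "j < j'" for j j'
  proof -
    have "Suc j < j'" "Suc j' < card uncut"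
      using spaced that S by (auto simp: intact_steps_def)
    then have "uncut_leaf j < uncut_leaf (Suc j)" "uncut_leaf (Suc j) < uncut_leaf j'"
      "uncut_leaf j' < uncut_leaf (Suc j')"
      using uncut_leaf_strict_mono by auto
    then have "?row j \<inter> ?row j' = {}"
      by (auto simp: between_def)
    moreover have "?col j \<inter> ?col j' = {}"
      using intact_steps_columns_disjoint S that \<open>Suc j < j'\<close> by blast
    ultimately show ?thesis ..
  qed
  show "?row j \<inter> ?row j' = {}" "?col j \<inter> ?col j' = {}" if "j \<in> S" "j' \<in> S" "j \<noteq> j'" for j j'
    using that disjoint disjoint[of j' j] by (cases "j < j'"; auto simp: Int_commute)+
qed

lemma card_intact_steps_le: "card intact_steps \<le> 4 * m"
proof -
  have "card {j \<in> intact_steps. even j} \<le> 2 * m" "card {j \<in> intact_steps. odd j} \<le> 2 * m"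
    by (rule card_spaced_intact_steps_le; auto; presburger)+
  moreover have "intact_steps = {j \<in> intact_steps. even j} \<union> {j \<in> intact_steps. odd j}"
    by auto
  ultimately show ?thesis
    using card_Un_le[of "{j \<in> intact_steps. even j}" "{j \<in> intact_steps. odd j}"] by simp
qed

theorem card_hitting_set_ge: "m * m \<le> card F + 4 * m + 1"
proof -
  have "intact_steps \<union> broken_steps = {..<card uncut - 1}"
    by (auto simp: intact_steps_def broken_steps_def)
  then have "card uncut - 1 \<le> card intact_steps + card broken_steps"
    using card_Un_le[of intact_steps broken_steps] by simp
  then show ?thesis
    using card_F_ge card_broken_steps_le card_intact_steps_le by linarith
qed

end

context grid_pair begin

lemma opt_int_lower_bound: "real (m * m) - 4 * real m - 1 \<le> opt_int leaves T1.tree T2.tree"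
proof (rule opt_int_ge_lower_bound)
  show "ip_feasible leaves T1.tree T2.tree (\<lambda>_. 1)"
    unfolding ip_feasible_def
  proof (intro conjI ballI)
    fix Q assume Q: "Q \<in> incompatible_quartets leaves T1.tree T2.tree"
    then have "T1.pendant ` Q \<subseteq> L_edges T1.tree Q" "Q \<noteq> {}"
      using T1.pendants_subset_L_edges by (auto simp: incompatible_quartets_def)
    then have "L_edges T1.tree Q \<noteq> {}"
      by blast
    moreover have "finite (L_edges T1.tree Q)"
      using L_edges_subset T1.finite_edges by (metis T1.snd_tree finite_subset)
    ultimately show "1 \<le> (\<Sum>e\<in>L_edges T1.tree Q. 1 :: real)"
      by (simp add: Suc_le_eq card_gt_0_iff)
  qed simp
  fix x assume x: "ip_feasible leaves T1.tree T2.tree x"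
  define F where "F = {e \<in> T1.edges. x e = 1}"
  interpret grid_hitting_set m F
    using m_ge_5 ip_feasible_hits_L_edges[OF x] by unfold_locales (auto simp: F_def T1.snd_tree)
  have "(\<Sum>e\<in>snd T1.tree. x e) = real (card F)"
    using x T1.finite_edges by (simp add: sum_zero_one_eq_card ip_feasible_def T1.snd_tree F_def)
  then show "real (m * m) - 4 * real m - 1 \<le> (\<Sum>e\<in>snd T1.tree. x e)"
    using card_hitting_set_ge by linarith
qed

theorem integrality_gap:
  "0 < opt_frac leaves T1.tree T2.tree \<and>
   4 - 20 / real m \<le> opt_int leaves T1.tree T2.tree / opt_frac leaves T1.tree T2.tree"
  using quotient_lower_bound[of "real m"] m_ge_5 one_le_opt_frac opt_frac_le_quarter
    opt_int_lower_bound
  by simp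

end

theorem theorem9:
  shows "\<exists>h :: nat \<Rightarrow> real. h \<longlonglongrightarrow> 0 \<and>
    (\<forall>N. \<exists>(X :: nat set) T1 T2. card X \<ge> N \<and> phylo_tree X T1 \<and> phylo_tree X T2 \<and>
       opt_frac X T1 T2 > 0 \<and>
       opt_int X T1 T2 / opt_frac X T1 T2 \<ge> 4 - h (card X))"
proof (intro exI[of _ "\<lambda>k. 20 / sqrt (real k)"] conjI allI)
  have "filterlim (\<lambda>k. sqrt (real k)) at_top sequentially"
    using filterlim_compose[OF sqrt_at_top filterlim_real_sequentially] .
  then show "(\<lambda>k. 20 / sqrt (real k)) \<longlonglongrightarrow> 0"
    by (intro tendsto_divide_0[OF tendsto_const] filterlim_at_top_imp_at_infinity)
  fix N :: nat
  interpret grid_pair "N + 5"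
    by unfold_locales simp
  have "N \<le> card leaves"
    using le_square[of "N + 5"] by (simp only: card_atLeastLessThan)
  moreover have "20 / sqrt (real (card leaves)) = 20 / real (N + 5)"
    by (simp add: real_sqrt_mult)
  ultimately show "\<exists>(X :: nat set) T1 T2. card X \<ge> N \<and> phylo_tree X T1 \<and> phylo_tree X T2 \<and>
      opt_frac X T1 T2 > 0 \<and> opt_int X T1 T2 / opt_frac X T1 T2 \<ge> 4 - 20 / sqrt (real (card X))"
    using integrality_gap T1.phylo_tree_caterpillar T2.phylo_tree_caterpillar by metis
qed

end
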